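(* Let $k\ge1$. If $k=2t+1$, then $M_{[k]}$ is stably isomorphic as a $\Lambda(Q_1,P)$-module to a direct sum of $2^t$ copies of $\Lambda(Q_1)=\Lambda(Q_1,P)/(P)$; more precisely $M_{[k]}\cong F\oplus\bigoplus_{i=1}^{2^t}\Lambda(Q_1)\{g_i\}$ with $F$ free over $\Lambda(Q_1,P)$ and each generator $g_i$ homogeneous of reduced length $t+1$. If $k=2t$ with $t\ge1$, then $M_{[k]}\cong F\oplus\bigoplus_{i=1}^{2^{t-1}}M_{[2]}\{g_i\}$ with $F$ free, where $M_{[2]}\{g_i\}$ is a copy of $M_{[2]}$ whose top generator (the image of $x_1x_2$) is $g_i$, each $g_i$ homogeneous of reduced length $t+1$.
   Context: Over $\mathbb F_2$, $\Lambda(Q_1,P)$ is the exterior algebra on $Q_1,P$, a Hopf algebra with $Q_1$ primitive and $\Delta(P)=P\otimes1+Q_1\otimes Q_1+1\otimes P$. For $i\in\mathbb N_+$, $M_i$ has basis $t_i,x_i$ with $Q_1(x_i)=t_i$, $Q_1(t_i)=0$, $P=0$. For a finite $J\subset\mathbb N_+$, $M_J=\bigotimes_{j\in J}M_j$ with action through the coproduct; $[n]=\{1,\dots,n\}$. $M_J$ has basis the elements $t_Ix_{J\setminus I}$ ($I\subseteq J$), meaning the tensor with factor $t_j$ for $j\in I$ and $x_j$ otherwise. The reduced length of $t_Ix_{J\setminus I}$ is $\ell=|J\setminus I|$; an element is homogeneous of reduced length $l$ if it is a sum of such basis elements of reduced length $l$. Two modules $M,N$ are stably isomorphic if $F\oplus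 M\cong F'\oplus N$ for free modules $F,F'$. *)

theory Defs
  imports Main
begin

text \<open>A basis element t_I x_(J-I) is encoded by the set I (the positions carrying t).
  A vector of M_J is a finite F_2-linear combination of basis elements, encoded
  as the (finite) set of basis elements with coefficient 1; addition is
  symmetric difference.\<close>

type_synonym vec = "nat set set"

definition vzero :: vec where "vzero = {}"

definition vadd :: "vec \<Rightarrow> vec \<Rightarrow> vec" where
  "vadd a b = (a - b) \<union> (b - a)"

definition vsumf :: "('i \<Rightarrow> vec) \<Rightarrow> 'i set \<Rightarrow> vec" where
  "vsumf b T = {K. odd (card {i \<in> T. K \<in> b i})}"

text \<open>Action of Q_1 on a basis element of M_J: via the coproduct Q_1 acts as
  the sum over j of Q_1 on the j-th factor (x_j |-> t_j, t_j |-> 0).\<close>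
definition Qb :: "nat set \<Rightarrow> nat set \<Rightarrow> vec" where
  "Qb J I = {insert j I | j. j \<in> J - I}"

text \<open>Action of P on a basis element of M_J: since P acts as 0 on each M_j and
  Delta(P) = P(x)1 + Q_1(x)Q_1 + 1(x)P, the iterated coproduct gives
  P = sum over unordered pairs {j,j'} of Q_1 on factor j times Q_1 on factor j'.\<close>
definition Pb :: "nat set \<Rightarrow> nat set \<Rightarrow> vec" where
  "Pb J I = {I \<union> {j, j'} | j j'. j \<in> J - I \<and> j' \<in> J - I \<and> j \<noteq> j'}"

definition Qop :: "nat set \<Rightarrow> vec \<Rightarrow> vec" where
  "Qop J v = vsumf (Qb J) v"

definition Pop :: "nat set \<Rightarrow> vec \<Rightarrow> vec" where
  "Pop J v = vsumf (Pb J) v"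

text \<open>Action of the F_2-basis 1, Q_1, P, Q_1 P of Lambda(Q_1,P), indexed 0..3.\<close>
definition lam_act :: "nat set \<Rightarrow> nat \<Rightarrow> vec \<Rightarrow> vec" where
  "lam_act J n v = (if n = 0 then v else if n = 1 then Qop J v
                    else if n = 2 then Pop J v else Qop J (Pop J v))"

definition in_M :: "nat set \<Rightarrow> vec \<Rightarrow> bool" where
  "in_M J v \<longleftrightarrow> v \<subseteq> Pow J"

definition homog :: "nat set \<Rightarrow> nat \<Rightarrow> vec \<Rightarrow> bool" where
  "homog J l v \<longleftrightarrow> in_M J v \<and> (\<forall>I\<in>v. card (J - I) = l)"

definition is_basis :: "nat set \<Rightarrow> ('i \<Rightarrow> vec) \<Rightarrow> 'i set \<Rightarrow> bool" where
  "is_basis J b S \<longleftrightarrow> finite S \<and> (\<forall>i\<in>S. in_M J (b i))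
     \<and> (\<forall>T\<subseteq>S. T \<noteq> {} \<longrightarrow> vsumf b T \<noteq> vzero)
     \<and> (\<forall>v. in_M J v \<longrightarrow> (\<exists>T\<subseteq>S. vsumf b T = v))"

definition is_hom :: "nat set \<Rightarrow> nat set \<Rightarrow> (vec \<Rightarrow> vec) \<Rightarrow> bool" where
  "is_hom J K \<phi> \<longleftrightarrow> (\<forall>v. in_M J v \<longrightarrow> in_M K (\<phi> v))
     \<and> (\<forall>v w. in_M J v \<longrightarrow> in_M J w \<longrightarrow> \<phi> (vadd v w) = vadd (\<phi> v) (\<phi> w))
     \<and> (\<forall>v. in_M J v \<longrightarrow> \<phi> (Qop J v) = Qop K (\<phi> v))
     \<and> (\<forall>v. in_M J v \<longrightarrow> \<phi> (Pop J v) = Pop K (\<phi> v))"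

end

theory Submission
  imports Defs
begin

text \<open>Since \<open>M_(J \<union> {c}) = M_J \<otimes> M_c\<close>, \<open>M_[k]\<close> is built from \<open>M_[1] = M_1\<close> by
  tensoring with one \<open>M_c\<close> at a time. Tensoring with \<open>M_c\<close> keeps free modules free, so
  only the non-free summands need attention, and for them two small computations suffice:
  \<open>M_1 \<otimes> M_c \<cong> M_[2]\<close> (relabelling), and
  \<open>M_[2] \<otimes> M_c \<cong> \<Lambda>(Q_1,P) \<oplus> \<Lambda>(Q_1) \<oplus> \<Lambda>(Q_1)\<close>, where
  \<open>\<Lambda>(Q_1) = M_1\<close>. Thus the non-free part alternates between copies of \<open>M_1\<close>
  (\<open>k\<close> odd) and of \<open>M_[2]\<close> (\<open>k\<close> even), doubling at each odd step, and the reduced length of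
  the generators grows by one every two steps. Linear independence comes from counting:
  the generators span \<open>M_[k]\<close> and there are exactly \<open>2^k\<close> of them.\<close>

section \<open>Sums over \<open>F_2\<close>\<close>

lemma vadd_comm: "vadd a b = vadd b a" by (auto simp: vadd_def)
lemma vadd_assoc: "vadd (vadd a b) c = vadd a (vadd b c)" by (auto simp: vadd_def)
lemma vadd_left_comm: "vadd a (vadd b c) = vadd b (vadd a c)" by (auto simp: vadd_def)
lemmas vadd_ac = vadd_comm vadd_assoc vadd_left_comm

lemma vadd_self [simp]: "vadd a a = {}" by (auto simp: vadd_def)
lemma vadd_empty [simp]: "vadd {} a = a" "vadd a {} = a" by (auto simp: vadd_def)
lemma vadd_disjoint: "A \<inter> B = {} \<Longrightarrow> vadd A B = A \<union> B" by (auto simp: vadd_def)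
lemma mem_vadd_iff: "x \<in> vadd A B \<longleftrightarrow> (x \<in> A) \<noteq> (x \<in> B)" by (auto simp: vadd_def)

lemma odd_card_sym_diff:
  assumes "finite A" "finite B"
  shows "odd (card (sym_diff A B)) \<longleftrightarrow> odd (card A) \<noteq> odd (card B)"
proof -
  have "card (sym_diff A B) = card (A - B) + card (B - A)"
    using assms by (intro card_Un_disjoint) auto
  moreover have "card (A - B) = card A - card (A \<inter> B)" "card (A \<inter> B) \<le> card A"
    using assms by (auto simp: card_Diff_subset_Int intro: card_mono)
  moreover have "card (B - A) = card B - card (A \<inter> B)" "card (A \<inter> B) \<le> card B"
    using assms by (auto simp: card_Diff_subset_Int Int_commute intro: card_mono)
  ultimately show ?thesis by presburger
qed

lemma mem_vsumf_iff: "K \<in> vsumf b T \<longleftrightarrow> odd (card {i\<in>T. K \<in> b i})"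
  by (simp add: vsumf_def)

lemma vsumf_empty [simp]: "vsumf b {} = {}"
  by (simp add: vsumf_def)

lemma vsumf_singleton [simp]: "vsumf b {i} = b i"
proof -
  have "{j\<in>{i}. K \<in> b j} = (if K \<in> b i then {i} else {})" for K by auto
  then show ?thesis by (auto simp: vsumf_def)
qed

lemma vsumf_sym_diff:
  assumes "finite A" "finite B"
  shows "vsumf b (sym_diff A B) = vadd (vsumf b A) (vsumf b B)"
proof -
  have "{i\<in>sym_diff A B. K \<in> b i} = sym_diff {i\<in>A. K \<in> b i} {i\<in>B. K \<in> b i}" for K
    by auto
  then show ?thesis using assms by (auto simp: mem_vsumf_iff mem_vadd_iff odd_card_sym_diff)
qed

lemma vsumf_vadd:
  assumes "finite T"
  shows "vsumf (\<lambda>i. vadd (b i) (c i)) T = vadd (vsumf b T) (vsumf c T)"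
proof -
  have "{i\<in>T. K \<in> vadd (b i) (c i)} = sym_diff {i\<in>T. K \<in> b i} {i\<in>T. K \<in> c i}" for K
    by (auto simp: vadd_def)
  then show ?thesis using assms by (auto simp: mem_vsumf_iff mem_vadd_iff odd_card_sym_diff)
qed

lemma vsumf_insert:
  assumes "finite T" "i \<notin> T"
  shows "vsumf b (insert i T) = vadd (b i) (vsumf b T)"
proof -
  have "insert i T = sym_diff {i} T" using assms by auto
  then show ?thesis using assms vsumf_sym_diff[of "{i}" T b] by simp
qed

lemma vsumf_cong: "(\<And>i. i \<in> T \<Longrightarrow> b i = c i) \<Longrightarrow> vsumf b T = vsumf c T"
  unfolding vsumf_def by (metis (no_types, lifting) Collect_cong)

lemma vsumf_subset_UN: "vsumf b T \<subseteq> \<Union> (b ` T)"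
proof
  fix K assume "K \<in> vsumf b T"
  then have "{i\<in>T. K \<in> b i} \<noteq> {}" by (metis card.empty even_zero mem_vsumf_iff)
  then show "K \<in> \<Union> (b ` T)" by blast
qed

lemma finite_vsumf: "finite T \<Longrightarrow> (\<And>i. i \<in> T \<Longrightarrow> finite (b i)) \<Longrightarrow> finite (vsumf b T)"
  by (meson finite_UN_I finite_subset vsumf_subset_UN)

lemma vsumf_singletons_inj:
  assumes "inj_on h T" "finite T"
  shows "vsumf (\<lambda>i. {h i}) T = h ` T"
proof -
  have "{i\<in>T. K \<in> {h i}} = (if K \<in> h ` T then {the_inv_into T h K} else {})" for K
    using assms by (auto simp: the_inv_into_f_f)
  then show ?thesis by (auto simp: vsumf_def)
qed

lemma vsumf_singletons: "finite T \<Longrightarrow> vsumf (\<lambda>i. {i}) T = T"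
  using vsumf_singletons_inj[of id T] by simp

lemma vsumf_image:
  assumes "inj_on h T"
  shows "vsumf b (h ` T) = vsumf (\<lambda>j. b (h j)) T"
proof -
  have "{i\<in>h ` T. K \<in> b i} = h ` {j\<in>T. K \<in> b (h j)}" for K by auto
  moreover have "card (h ` {j\<in>T. K \<in> b (h j)}) = card {j\<in>T. K \<in> b (h j)}" for K
    using assms by (intro card_image) (auto intro: inj_on_subset)
  ultimately show ?thesis by (simp add: vsumf_def)
qed

lemma vsumf_vsumf:
  assumes "finite T" "\<And>i. i \<in> T \<Longrightarrow> finite (b i)"
  shows "vsumf c (vsumf b T) = vsumf (\<lambda>i. vsumf c (b i)) T"
  using assms
proof (induction T rule: finite_induct)
  case (insert i T)
  have "finite (b i)" "finite (vsumf b T)" using insert by (auto intro: finite_vsumf)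
  then have "vsumf c (vadd (b i) (vsumf b T)) = vadd (vsumf c (b i)) (vsumf c (vsumf b T))"
    using vsumf_sym_diff[of "b i" "vsumf b T" c] by (simp add: vadd_def)
  then show ?case using insert by (simp add: vsumf_insert)
qed simp

section \<open>The actions of \<open>Q_1\<close> and \<open>P\<close>\<close>

lemma Qb_eq_image: "Qb J I = (\<lambda>j. insert j I) ` (J - I)"
  by (auto simp: Qb_def)

lemma Pb_eq_image:
  "Pb J I = (\<lambda>(j, j'). I \<union> {j, j'}) ` {(j, j'). j \<in> J - I \<and> j' \<in> J - I \<and> j \<noteq> j'}"
  by (auto simp: Pb_def)

lemma finite_Qb [simp]: "finite J \<Longrightarrow> finite (Qb J I)"
  by (simp add: Qb_eq_image)

lemma finite_Pb [simp]: "finite J \<Longrightarrow> finite (Pb J I)"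
proof -
  assume "finite J"
  then have "finite (J \<times> J)" by simp
  then have "finite {(j, j'). j \<in> J - I \<and> j' \<in> J - I \<and> j \<noteq> j'}"
    by (rule rev_finite_subset) auto
  then show ?thesis by (simp add: Pb_eq_image)
qed

lemma in_M_finite: "finite J \<Longrightarrow> in_M J v \<Longrightarrow> finite v"
  unfolding in_M_def by (meson finite_Pow_iff finite_subset)

lemma in_M_subset: "in_M J v \<Longrightarrow> I \<in> v \<Longrightarrow> I \<subseteq> J"
  by (auto simp: in_M_def)

lemma in_M_mono: "in_M J v \<Longrightarrow> J \<subseteq> K \<Longrightarrow> in_M K v"
  by (auto simp: in_M_def)

lemma in_M_empty [simp]: "in_M J {}"
  by (simp add: in_M_def)

lemma in_M_singleton [simp]: "in_M J {I} \<longleftrightarrow> I \<subseteq> J"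
  by (simp add: in_M_def)

lemma in_M_vadd: "in_M J a \<Longrightarrow> in_M J b \<Longrightarrow> in_M J (vadd a b)"
  by (auto simp: in_M_def vadd_def)

lemma in_M_vsumf: "(\<And>i. i \<in> T \<Longrightarrow> in_M J (b i)) \<Longrightarrow> in_M J (vsumf b T)"
  unfolding in_M_def using vsumf_subset_UN by blast

lemma in_M_Qb: "I \<subseteq> J \<Longrightarrow> in_M J (Qb J I)"
  by (auto simp: in_M_def Qb_def)

lemma in_M_Pb: "I \<subseteq> J \<Longrightarrow> in_M J (Pb J I)"
  by (auto simp: in_M_def Pb_def)

lemma in_M_Qop: "in_M J v \<Longrightarrow> in_M J (Qop J v)"
  unfolding Qop_def by (intro in_M_vsumf in_M_Qb) (rule in_M_subset)

lemma in_M_Pop: "in_M J v \<Longrightarrow> in_M J (Pop J v)"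
  unfolding Pop_def by (intro in_M_vsumf in_M_Pb) (rule in_M_subset)

lemma in_M_lam_act: "in_M J v \<Longrightarrow> in_M J (lam_act J n v)"
  by (simp add: lam_act_def in_M_Qop in_M_Pop)

lemma Qop_singleton [simp]: "Qop J {I} = Qb J I"
  by (simp add: Qop_def)

lemma Pop_singleton [simp]: "Pop J {I} = Pb J I"
  by (simp add: Pop_def)

lemma Qop_vadd: "finite a \<Longrightarrow> finite b \<Longrightarrow> Qop J (vadd a b) = vadd (Qop J a) (Qop J b)"
  using vsumf_sym_diff[of a b "Qb J"] by (simp add: Qop_def vadd_def)

lemma Pop_vadd: "finite a \<Longrightarrow> finite b \<Longrightarrow> Pop J (vadd a b) = vadd (Pop J a) (Pop J b)"
  using vsumf_sym_diff[of a b "Pb J"] by (simp add: Pop_def vadd_def)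

lemma is_hom_zero: "is_hom S J \<phi> \<Longrightarrow> \<phi> {} = {}"
  unfolding is_hom_def by (metis in_M_empty vadd_self)

lemma is_hom_vadd: "is_hom S J \<phi> \<Longrightarrow> in_M S v \<Longrightarrow> in_M S w \<Longrightarrow> \<phi> (vadd v w) = vadd (\<phi> v) (\<phi> w)"
  unfolding is_hom_def by blast

lemma is_hom_in_M: "is_hom S J \<phi> \<Longrightarrow> in_M S v \<Longrightarrow> in_M J (\<phi> v)"
  unfolding is_hom_def by blast

lemma is_hom_Qop: "is_hom S J \<phi> \<Longrightarrow> in_M S v \<Longrightarrow> \<phi> (Qop S v) = Qop J (\<phi> v)"
  unfolding is_hom_def by blast

lemma is_hom_Pop: "is_hom S J \<phi> \<Longrightarrow> in_M S v \<Longrightarrow> \<phi> (Pop S v) = Pop J (\<phi> v)"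
  unfolding is_hom_def by blast

lemma is_hom_lam_act: "is_hom S J \<phi> \<Longrightarrow> in_M S v \<Longrightarrow> \<phi> (lam_act S n v) = lam_act J n (\<phi> v)"
  unfolding lam_act_def using is_hom_Qop is_hom_Pop in_M_Pop by auto

lemma is_hom_comp: "is_hom S J \<phi> \<Longrightarrow> is_hom J K \<psi> \<Longrightarrow> is_hom S K (\<psi> \<circ> \<phi>)"
  unfolding is_hom_def by auto

lemma is_hom_vsumf:
  assumes "is_hom S J \<phi>" "finite T" "\<And>i. i \<in> T \<Longrightarrow> in_M S (b i)"
  shows "\<phi> (vsumf b T) = vsumf (\<lambda>i. \<phi> (b i)) T"
  using assms(2,3)
proof (induction T rule: finite_induct)
  case (insert i T)
  have "in_M S (vsumf b T)" using insert by (intro in_M_vsumf) auto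
  then show ?case using insert is_hom_vadd[OF assms(1)] by (simp add: vsumf_insert)
qed (simp add: is_hom_zero[OF assms(1)])

lemma is_hom_vsumf_extension:
  assumes fS: "finite S" and fK: "finite K"
    and M: "\<And>I. I \<subseteq> S \<Longrightarrow> in_M K (f I)"
    and Q: "\<And>I. I \<subseteq> S \<Longrightarrow> vsumf f (Qb S I) = Qop K (f I)"
    and P: "\<And>I. I \<subseteq> S \<Longrightarrow> vsumf f (Pb S I) = Pop K (f I)"
  shows "is_hom S K (vsumf f)"
  unfolding is_hom_def
proof (intro conjI allI impI)
  fix v assume v: "in_M S v"
  have fv: "finite v" using in_M_finite[OF fS v] .
  have sub: "I \<subseteq> S" if "I \<in> v" for I using in_M_subset[OF v that] .
  have ff: "finite (f I)" if "I \<in> v" for I using in_M_finite[OF fK M[OF sub[OF that]]] .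
  show "in_M K (vsumf f v)" using M sub by (intro in_M_vsumf) blast
  have "vsumf f (Qop S v) = vsumf (\<lambda>I. vsumf f (Qb S I)) v"
    unfolding Qop_def using fv fS by (intro vsumf_vsumf) auto
  also have "\<dots> = vsumf (\<lambda>I. vsumf (Qb K) (f I)) v"
    using Q sub by (intro vsumf_cong) (simp add: Qop_def)
  also have "\<dots> = Qop K (vsumf f v)"
    unfolding Qop_def using fv ff by (intro vsumf_vsumf[symmetric])
  finally show "vsumf f (Qop S v) = Qop K (vsumf f v)" .
  have "vsumf f (Pop S v) = vsumf (\<lambda>I. vsumf f (Pb S I)) v"
    unfolding Pop_def using fv fS by (intro vsumf_vsumf) auto
  also have "\<dots> = vsumf (\<lambda>I. vsumf (Pb K) (f I)) v"
    using P sub by (intro vsumf_cong) (simp add: Pop_def)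
  also have "\<dots> = Pop K (vsumf f v)"
    unfolding Pop_def using fv ff by (intro vsumf_vsumf[symmetric])
  finally show "vsumf f (Pop S v) = Pop K (vsumf f v)" .
next
  fix v w assume "in_M S v" "in_M S w"
  then have "finite v" "finite w" using in_M_finite[OF fS] by auto
  then show "vsumf f (vadd v w) = vadd (vsumf f v) (vsumf f w)"
    using vsumf_sym_diff[of v w f] by (simp add: vadd_def)
qed

section \<open>Adjoining a coordinate\<close>

text \<open>For \<open>c \<notin> J\<close>, an element of \<open>M_(J \<union> {c}) = M_J \<otimes> M_c\<close> is
  \<open>p \<otimes> x_c + q \<otimes> t_c\<close> with \<open>p, q \<in> M_J\<close>; in the set encoding
  \<open>p \<otimes> x_c\<close> is \<open>p\<close> itself and \<open>q \<otimes> t_c\<close> is \<open>times_t c q\<close>.\<close>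

definition times_t :: "nat \<Rightarrow> vec \<Rightarrow> vec" where
  "times_t c v = insert c ` v"

lemma times_t_empty [simp]: "times_t c {} = {}"
  by (simp add: times_t_def)

lemma times_t_singleton [simp]: "times_t c {I} = {insert c I}"
  by (simp add: times_t_def)

lemma in_M_times_t: "in_M J v \<Longrightarrow> in_M (insert c J) (times_t c v)"
  by (auto simp: in_M_def times_t_def)

lemma notin_Union_if_in_M: "in_M J v \<Longrightarrow> c \<notin> J \<Longrightarrow> c \<notin> \<Union> v"
  by (auto simp: in_M_def)

lemma times_t_vadd:
  assumes "c \<notin> \<Union> x" "c \<notin> \<Union> y"
  shows "times_t c (vadd x y) = vadd (times_t c x) (times_t c y)"
proof -
  have inj: "inj_on (insert c) (x \<union> y)"
    using assms by (auto simp: inj_on_def)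
  have "insert c ` (x - y) = insert c ` x - insert c ` y"
    "insert c ` (y - x) = insert c ` y - insert c ` x"
    by (auto intro!: inj_on_image_set_diff[OF inj])
  then show ?thesis unfolding times_t_def vadd_def by (simp add: image_Un)
qed

lemma times_t_vsumf:
  assumes "finite T" "\<And>i. i \<in> T \<Longrightarrow> finite (b i) \<and> c \<notin> \<Union> (b i)"
  shows "times_t c (vsumf b T) = vsumf (\<lambda>i. times_t c (b i)) T"
  using assms
proof (induction T rule: finite_induct)
  case (insert i T)
  have "c \<notin> \<Union> (b i)" "c \<notin> \<Union> (vsumf b T)"
    using insert.prems vsumf_subset_UN[of b T] by blast+
  then have "times_t c (vadd (b i) (vsumf b T)) = vadd (times_t c (b i)) (times_t c (vsumf b T))"
    by (rule times_t_vadd)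
  moreover have "times_t c (vsumf b T) = vsumf (\<lambda>i. times_t c (b i)) T"
    using insert.IH insert.prems by blast
  ultimately show ?case using insert.hyps by (simp add: vsumf_insert)
qed simp

lemma Qb_insert_x:
  assumes "I \<subseteq> J" "c \<notin> J"
  shows "Qb (insert c J) I = vadd (Qb J I) {insert c I}"
proof -
  have "Qb (insert c J) I = insert (insert c I) (Qb J I)"
    using assms by (auto simp: Qb_def)
  moreover have "insert c I \<notin> Qb J I" using assms by (auto simp: Qb_def)
  ultimately show ?thesis by (auto simp: vadd_def)
qed

lemma Qb_insert_t:
  "I \<subseteq> J \<Longrightarrow> c \<notin> J \<Longrightarrow> Qb (insert c J) (insert c I) = times_t c (Qb J I)"
  by (simp add: Qb_eq_image times_t_def image_image insert_commute insert_Diff_if)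

lemma Pb_insert_x:
  assumes "I \<subseteq> J" "c \<notin> J"
  shows "Pb (insert c J) I = vadd (Pb J I) (times_t c (Qb J I))"
proof -
  have "Pb (insert c J) I = Pb J I \<union> times_t c (Qb J I)"
    unfolding Pb_def Qb_def times_t_def using assms by blast
  moreover have "Pb J I \<inter> times_t c (Qb J I) = {}"
    using assms in_M_Pb[of I J] by (auto simp: in_M_def times_t_def)
  ultimately show ?thesis by (simp add: vadd_disjoint)
qed

lemma Pb_insert_t:
  assumes "I \<subseteq> J" "c \<notin> J"
  shows "Pb (insert c J) (insert c I) = times_t c (Pb J I)"
proof -
  have "insert c J - insert c I = J - I" using assms by auto
  then show ?thesis unfolding Pb_eq_image times_t_def image_image
    by (auto intro!: image_cong)
qed

context
  fixes J :: "nat set" and c :: nat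
  assumes fin_J: "finite J" and c_notin: "c \<notin> J"
begin

lemma Qb_fin_notin: "I \<subseteq> J \<Longrightarrow> finite (Qb J I) \<and> c \<notin> \<Union> (Qb J I)"
  using fin_J c_notin by (auto simp: Qb_def)

lemma Pb_fin_notin: "I \<subseteq> J \<Longrightarrow> finite (Pb J I) \<and> c \<notin> \<Union> (Pb J I)"
  using fin_J c_notin finite_Pb[OF fin_J] by (auto simp: Pb_def)

lemma Qop_insert_x:
  assumes p: "in_M J p"
  shows "Qop (insert c J) p = vadd (Qop J p) (times_t c p)"
proof -
  have fp: "finite p" using in_M_finite[OF fin_J p] .
  have "Qop (insert c J) p = vsumf (\<lambda>I. vadd (Qb J I) {insert c I}) p"
    unfolding Qop_def using Qb_insert_x c_notin in_M_subset[OF p] by (intro vsumf_cong) blast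
  also have "\<dots> = vadd (Qop J p) (vsumf (\<lambda>I. times_t c {I}) p)"
    unfolding Qop_def using fp by (simp add: vsumf_vadd)
  also have "vsumf (\<lambda>I. times_t c {I}) p = times_t c p"
    using fp notin_Union_if_in_M[OF p c_notin] vsumf_singletons[OF fp]
    by (subst times_t_vsumf[symmetric]) auto
  finally show ?thesis .
qed

lemma Pop_insert_x:
  assumes p: "in_M J p"
  shows "Pop (insert c J) p = vadd (Pop J p) (times_t c (Qop J p))"
proof -
  have fp: "finite p" using in_M_finite[OF fin_J p] .
  have "Pop (insert c J) p = vsumf (\<lambda>I. vadd (Pb J I) (times_t c (Qb J I))) p"
    unfolding Pop_def using Pb_insert_x c_notin in_M_subset[OF p] by (intro vsumf_cong) blast
  also have "\<dots> = vadd (Pop J p) (vsumf (\<lambda>I. times_t c (Qb J I)) p)"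
    unfolding Pop_def using fp by (rule vsumf_vadd)
  also have "vsumf (\<lambda>I. times_t c (Qb J I)) p = times_t c (Qop J p)"
    unfolding Qop_def using fp Qb_fin_notin[OF in_M_subset[OF p]]
    by (intro times_t_vsumf[symmetric]) auto
  finally show ?thesis .
qed

lemma Qop_insert_t:
  assumes q: "in_M J q"
  shows "Qop (insert c J) (times_t c q) = times_t c (Qop J q)"
proof -
  have inj: "inj_on (insert c) q"
    using notin_Union_if_in_M[OF q c_notin] by (auto simp: inj_on_def)
  have "Qop (insert c J) (times_t c q) = vsumf (\<lambda>I. Qb (insert c J) (insert c I)) q"
    unfolding Qop_def times_t_def by (rule vsumf_image[OF inj])
  also have "\<dots> = vsumf (\<lambda>I. times_t c (Qb J I)) q"
    using Qb_insert_t c_notin in_M_subset[OF q] by (intro vsumf_cong) blast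
  also have "\<dots> = times_t c (Qop J q)"
    unfolding Qop_def using in_M_finite[OF fin_J q] Qb_fin_notin[OF in_M_subset[OF q]]
    by (intro times_t_vsumf[symmetric]) auto
  finally show ?thesis .
qed

lemma Pop_insert_t:
  assumes q: "in_M J q"
  shows "Pop (insert c J) (times_t c q) = times_t c (Pop J q)"
proof -
  have inj: "inj_on (insert c) q"
    using notin_Union_if_in_M[OF q c_notin] by (auto simp: inj_on_def)
  have "Pop (insert c J) (times_t c q) = vsumf (\<lambda>I. Pb (insert c J) (insert c I)) q"
    unfolding Pop_def times_t_def by (rule vsumf_image[OF inj])
  also have "\<dots> = vsumf (\<lambda>I. times_t c (Pb J I)) q"
    using Pb_insert_t c_notin in_M_subset[OF q] by (intro vsumf_cong) blast
  also have "\<dots> = times_t c (Pop J q)"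
    unfolding Pop_def using in_M_finite[OF fin_J q] Pb_fin_notin[OF in_M_subset[OF q]]
    by (intro times_t_vsumf[symmetric]) auto
  finally show ?thesis .
qed

lemma Qop_insert:
  assumes p: "in_M J p" and q: "in_M J q"
  shows "Qop (insert c J) (vadd p (times_t c q)) = vadd (Qop J p) (times_t c (vadd p (Qop J q)))"
proof -
  have "finite p" "finite (times_t c q)"
    using in_M_finite[OF fin_J p] in_M_finite[OF fin_J q] by (auto simp: times_t_def)
  then have "Qop (insert c J) (vadd p (times_t c q))
      = vadd (vadd (Qop J p) (times_t c p)) (times_t c (Qop J q))"
    using Qop_insert_x[OF p] Qop_insert_t[OF q] by (simp add: Qop_vadd)
  moreover have "times_t c (vadd p (Qop J q)) = vadd (times_t c p) (times_t c (Qop J q))"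
    using notin_Union_if_in_M p q in_M_Qop c_notin by (intro times_t_vadd) blast+
  ultimately show ?thesis by (simp add: vadd_ac)
qed

lemma Pop_insert:
  assumes p: "in_M J p" and q: "in_M J q"
  shows "Pop (insert c J) (vadd p (times_t c q))
    = vadd (Pop J p) (times_t c (vadd (Qop J p) (Pop J q)))"
proof -
  have "finite p" "finite (times_t c q)"
    using in_M_finite[OF fin_J p] in_M_finite[OF fin_J q] by (auto simp: times_t_def)
  then have "Pop (insert c J) (vadd p (times_t c q))
      = vadd (vadd (Pop J p) (times_t c (Qop J p))) (times_t c (Pop J q))"
    using Pop_insert_x[OF p] Pop_insert_t[OF q] by (simp add: Pop_vadd)
  moreover have "times_t c (vadd (Qop J p) (Pop J q))
      = vadd (times_t c (Qop J p)) (times_t c (Pop J q))"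
    using notin_Union_if_in_M p q in_M_Qop in_M_Pop c_notin by (intro times_t_vadd) blast+
  ultimately show ?thesis by (simp add: vadd_ac)
qed

end

definition x_part :: "nat \<Rightarrow> vec \<Rightarrow> vec" where
  "x_part c v = {I \<in> v. c \<notin> I}"

definition t_part :: "nat \<Rightarrow> vec \<Rightarrow> vec" where
  "t_part c v = (\<lambda>I. I - {c}) ` {I \<in> v. c \<in> I}"

lemma x_part_t_part:
  assumes "in_M (insert c J) v" "c \<notin> J"
  shows "v = vadd (x_part c v) (times_t c (t_part c v))"
    and "in_M J (x_part c v)" and "in_M J (t_part c v)"
proof -
  have "times_t c (t_part c v) = (\<lambda>I. insert c (I - {c})) ` {I \<in> v. c \<in> I}"
    by (simp add: times_t_def t_part_def image_image)
  also have "\<dots> = {I \<in> v. c \<in> I}" by (auto simp: image_iff insert_absorb)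
  finally show "v = vadd (x_part c v) (times_t c (t_part c v))"
    by (auto simp: x_part_def vadd_def)
  show "in_M J (x_part c v)" "in_M J (t_part c v)"
    using assms by (auto simp: x_part_def t_part_def in_M_def)
qed

lemma x_part_t_part_vadd:
  assumes "in_M J p" "in_M J q" "c \<notin> J"
  shows "x_part c (vadd p (times_t c q)) = p" and "t_part c (vadd p (times_t c q)) = q"
proof -
  have p: "\<forall>I\<in>p. c \<notin> I" and q: "\<forall>I\<in>q. c \<notin> I"
    using assms by (auto simp: in_M_def)
  have t: "\<forall>I\<in>times_t c q. c \<in> I" by (auto simp: times_t_def)
  then have v: "vadd p (times_t c q) = p \<union> times_t c q" using p by (intro vadd_disjoint) blast
  then show "x_part c (vadd p (times_t c q)) = p" using p t by (auto simp: x_part_def)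
  have "{I \<in> vadd p (times_t c q). c \<in> I} = times_t c q" using v p t by auto
  then have "t_part c (vadd p (times_t c q)) = (\<lambda>I. I - {c}) ` insert c ` q"
    by (simp add: t_part_def times_t_def)
  also have "\<dots> = q" using q by (force simp: image_image)
  finally show "t_part c (vadd p (times_t c q)) = q" .
qed

lemma Qop_Qop: "finite J \<Longrightarrow> in_M J v \<Longrightarrow> Qop J (Qop J v) = {}"
proof (induction J arbitrary: v rule: finite_induct)
  case empty
  have "Qb {} = (\<lambda>_. {})" by (simp add: Qb_def fun_eq_iff)
  then show ?case by (simp add: Qop_def vsumf_def)
next
  case (insert c J)
  define p q where "p = x_part c v" and "q = t_part c v"
  have v: "v = vadd p (times_t c q)" and p: "in_M J p" and q: "in_M J q"
    using x_part_t_part[OF insert.prems insert.hyps(2)] by (simp_all add: p_def q_def)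
  have Qq: "in_M J (Qop J q)" and Qp: "in_M J (Qop J p)" using in_M_Qop p q by auto
  have "Qop (insert c J) (Qop (insert c J) v)
      = Qop (insert c J) (vadd (Qop J p) (times_t c (vadd p (Qop J q))))"
    using Qop_insert[OF insert.hyps(1,2) p q] v by simp
  also have "\<dots> = vadd (Qop J (Qop J p)) (times_t c (vadd (Qop J p) (Qop J (vadd p (Qop J q)))))"
    by (rule Qop_insert[OF insert.hyps(1,2) Qp in_M_vadd[OF p Qq]])
  also have "Qop J (vadd p (Qop J q)) = vadd (Qop J p) (Qop J (Qop J q))"
    using in_M_finite[OF insert.hyps(1)] p Qq by (simp add: Qop_vadd)
  finally show ?case using insert.IH p q by simp
qed

lemma lam_act_insert_x:
  assumes J: "finite J" "c \<notin> J" and f: "in_M J f" and n: "n < 4"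
  shows "lam_act (insert c J) n f
    = vadd (lam_act J n f) (times_t c (if n = 0 then {} else lam_act J (n - 1) f))"
proof -
  have "Qop (insert c J) (Pop (insert c J) f)
      = Qop (insert c J) (vadd (Pop J f) (times_t c (Qop J f)))"
    using Pop_insert_x[OF J f] by simp
  also have "\<dots> = vadd (Qop J (Pop J f)) (times_t c (vadd (Pop J f) (Qop J (Qop J f))))"
    by (rule Qop_insert[OF J in_M_Pop[OF f] in_M_Qop[OF f]])
  finally have "Qop (insert c J) (Pop (insert c J) f) = vadd (Qop J (Pop J f)) (times_t c (Pop J f))"
    using Qop_Qop[OF J(1) f] by simp
  moreover have "n = 0 \<or> n = 1 \<or> n = 2 \<or> n = 3" using n by auto
  ultimately show ?thesis
    using Qop_insert_x[OF J f] Pop_insert_x[OF J f] by (auto simp: lam_act_def)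
qed

lemma lam_act_insert_t:
  "finite J \<Longrightarrow> c \<notin> J \<Longrightarrow> in_M J f \<Longrightarrow>
    lam_act (insert c J) n (times_t c f) = times_t c (lam_act J n f)"
  using Qop_insert_t Pop_insert_t in_M_Pop by (auto simp: lam_act_def)

definition tensor_id :: "nat \<Rightarrow> (vec \<Rightarrow> vec) \<Rightarrow> vec \<Rightarrow> vec" where
  "tensor_id c \<phi> v = vadd (\<phi> (x_part c v)) (times_t c (\<phi> (t_part c v)))"

lemma tensor_id_vadd_times_t:
  "in_M S p \<Longrightarrow> in_M S q \<Longrightarrow> c \<notin> S \<Longrightarrow>
    tensor_id c \<phi> (vadd p (times_t c q)) = vadd (\<phi> p) (times_t c (\<phi> q))"
  by (simp add: tensor_id_def x_part_t_part_vadd)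

context
  fixes S J :: "nat set" and c :: nat and \<phi> :: "vec \<Rightarrow> vec"
  assumes fin_S: "finite S" and fin_J: "finite J" and c_notin_S: "c \<notin> S" and c_notin_J: "c \<notin> J"
    and hom: "is_hom S J \<phi>"
begin

lemma tensor_id_cases:
  assumes "in_M (insert c S) v"
  obtains p q where "in_M S p" "in_M S q" "v = vadd p (times_t c q)"
    "tensor_id c \<phi> v = vadd (\<phi> p) (times_t c (\<phi> q))"
  using x_part_t_part[OF assms c_notin_S] tensor_id_def by metis

lemma in_M_tensor_id: "in_M (insert c S) v \<Longrightarrow> in_M (insert c J) (tensor_id c \<phi> v)"
  by (elim tensor_id_cases)
    (simp add: in_M_vadd in_M_mono[OF is_hom_in_M[OF hom]] in_M_times_t is_hom_in_M[OF hom] subset_insertI)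

lemma tensor_id_vadd:
  assumes v: "in_M (insert c S) v" and w: "in_M (insert c S) w"
  shows "tensor_id c \<phi> (vadd v w) = vadd (tensor_id c \<phi> v) (tensor_id c \<phi> w)"
proof -
  obtain p q where p: "in_M S p" and q: "in_M S q" and v: "v = vadd p (times_t c q)"
    and \<phi>v: "tensor_id c \<phi> v = vadd (\<phi> p) (times_t c (\<phi> q))"
    using tensor_id_cases[OF v] .
  obtain p' q' where p': "in_M S p'" and q': "in_M S q'" and w: "w = vadd p' (times_t c q')"
    and \<phi>w: "tensor_id c \<phi> w = vadd (\<phi> p') (times_t c (\<phi> q'))"
    using tensor_id_cases[OF w] .
  have "times_t c (vadd q q') = vadd (times_t c q) (times_t c q')"
    using q q' c_notin_S by (intro times_t_vadd notin_Union_if_in_M)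
  then have "vadd v w = vadd (vadd p p') (times_t c (vadd q q'))"
    using v w by (simp add: vadd_ac)
  then have "tensor_id c \<phi> (vadd v w) = vadd (\<phi> (vadd p p')) (times_t c (\<phi> (vadd q q')))"
    using tensor_id_vadd_times_t[OF in_M_vadd[OF p p'] in_M_vadd[OF q q'] c_notin_S] by simp
  also have "\<dots> = vadd (\<phi> (vadd p p')) (vadd (times_t c (\<phi> q)) (times_t c (\<phi> q')))"
    using is_hom_vadd[OF hom q q'] times_t_vadd notin_Union_if_in_M is_hom_in_M[OF hom] q q' c_notin_J
    by metis
  finally show ?thesis using \<phi>v \<phi>w is_hom_vadd[OF hom p p'] by (simp add: vadd_ac)
qed

lemma tensor_id_Qop:
  assumes v: "in_M (insert c S) v"
  shows "tensor_id c \<phi> (Qop (insert c S) v) = Qop (insert c J) (tensor_id c \<phi> v)"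
proof -
  obtain p q where p: "in_M S p" and q: "in_M S q" and v: "v = vadd p (times_t c q)"
    and \<phi>v: "tensor_id c \<phi> v = vadd (\<phi> p) (times_t c (\<phi> q))"
    using tensor_id_cases[OF v] .
  have "tensor_id c \<phi> (Qop (insert c S) v)
      = tensor_id c \<phi> (vadd (Qop S p) (times_t c (vadd p (Qop S q))))"
    using Qop_insert[OF fin_S c_notin_S p q] v by simp
  also have "\<dots> = vadd (\<phi> (Qop S p)) (times_t c (\<phi> (vadd p (Qop S q))))"
    using in_M_Qop p q c_notin_S by (intro tensor_id_vadd_times_t in_M_vadd)
  also have "\<dots> = vadd (Qop J (\<phi> p)) (times_t c (vadd (\<phi> p) (Qop J (\<phi> q))))"
    using is_hom_vadd[OF hom p in_M_Qop[OF q]] is_hom_Qop[OF hom] p q by simp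
  also have "\<dots> = Qop (insert c J) (tensor_id c \<phi> v)"
    using Qop_insert[OF fin_J c_notin_J is_hom_in_M[OF hom p] is_hom_in_M[OF hom q]] \<phi>v by simp
  finally show ?thesis .
qed

lemma tensor_id_Pop:
  assumes v: "in_M (insert c S) v"
  shows "tensor_id c \<phi> (Pop (insert c S) v) = Pop (insert c J) (tensor_id c \<phi> v)"
proof -
  obtain p q where p: "in_M S p" and q: "in_M S q" and v: "v = vadd p (times_t c q)"
    and \<phi>v: "tensor_id c \<phi> v = vadd (\<phi> p) (times_t c (\<phi> q))"
    using tensor_id_cases[OF v] .
  have "tensor_id c \<phi> (Pop (insert c S) v)
      = tensor_id c \<phi> (vadd (Pop S p) (times_t c (vadd (Qop S p) (Pop S q))))"
    using Pop_insert[OF fin_S c_notin_S p q] v by simp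
  also have "\<dots> = vadd (\<phi> (Pop S p)) (times_t c (\<phi> (vadd (Qop S p) (Pop S q))))"
    using in_M_Qop in_M_Pop p q c_notin_S by (intro tensor_id_vadd_times_t in_M_vadd)
  also have "\<dots> = vadd (Pop J (\<phi> p)) (times_t c (vadd (Qop J (\<phi> p)) (Pop J (\<phi> q))))"
    using is_hom_vadd[OF hom in_M_Qop[OF p] in_M_Pop[OF q]] is_hom_Qop[OF hom] is_hom_Pop[OF hom] p q
    by simp
  also have "\<dots> = Pop (insert c J) (tensor_id c \<phi> v)"
    using Pop_insert[OF fin_J c_notin_J is_hom_in_M[OF hom p] is_hom_in_M[OF hom q]] \<phi>v by simp
  finally show ?thesis .
qed

lemma is_hom_tensor_id: "is_hom (insert c S) (insert c J) (tensor_id c \<phi>)"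
  unfolding is_hom_def using in_M_tensor_id tensor_id_vadd tensor_id_Qop tensor_id_Pop by blast

lemma tensor_id_singleton_x: "I \<subseteq> S \<Longrightarrow> tensor_id c \<phi> {I} = \<phi> {I}"
  using tensor_id_vadd_times_t[of S "{I}" "{}" c \<phi>] c_notin_S is_hom_zero[OF hom] by simp

lemma tensor_id_singleton_t: "I \<subseteq> S \<Longrightarrow> tensor_id c \<phi> {insert c I} = times_t c (\<phi> {I})"
  using tensor_id_vadd_times_t[of S "{}" "{I}" c \<phi>] c_notin_S is_hom_zero[OF hom] by simp

end

section \<open>Decompositions\<close>

inductive_set vspan :: "vec set \<Rightarrow> vec set" for B where
  vspan_zero: "{} \<in> vspan B"
| vspan_add_base: "x \<in> B \<Longrightarrow> y \<in> vspan B \<Longrightarrow> vadd x y \<in> vspan B"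

lemma vspan_base: "x \<in> B \<Longrightarrow> x \<in> vspan B"
  using vspan_add_base[OF _ vspan_zero] by fastforce

lemma vspan_vadd: "x \<in> vspan B \<Longrightarrow> y \<in> vspan B \<Longrightarrow> vadd x y \<in> vspan B"
  by (induction x rule: vspan.induct) (auto simp: vadd_assoc intro: vspan_add_base)

lemma vspan_subset: assumes "B \<subseteq> vspan C" shows "x \<in> vspan B \<Longrightarrow> x \<in> vspan C"
  by (induction x rule: vspan.induct) (use assms in \<open>auto intro: vspan_vadd vspan_zero\<close>)

lemma in_M_vspan: assumes "B \<subseteq> Collect (in_M J)" shows "x \<in> vspan B \<Longrightarrow> in_M J x"
  by (induction x rule: vspan.induct) (use assms in \<open>auto intro: in_M_vadd\<close>)

lemma is_hom_vspan:
  assumes "is_hom S J \<phi>" "B \<subseteq> Collect (in_M S)"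
  shows "x \<in> vspan B \<Longrightarrow> \<phi> x \<in> vspan (\<phi> ` B)"
proof (induction x rule: vspan.induct)
  case vspan_zero
  then show ?case using is_hom_zero[OF assms(1)] vspan.vspan_zero by metis
next
  case (vspan_add_base x y)
  have "in_M S y" using in_M_vspan[OF assms(2)] vspan_add_base by blast
  then have "\<phi> (vadd x y) = vadd (\<phi> x) (\<phi> y)"
    using vspan_add_base is_hom_vadd[OF assms(1)] assms(2) by blast
  then show ?case using vspan_add_base by (auto intro: vspan.vspan_add_base)
qed

lemma times_t_vspan:
  assumes "c \<notin> J" "B \<subseteq> Collect (in_M J)"
  shows "x \<in> vspan B \<Longrightarrow> times_t c x \<in> vspan (times_t c ` B)"
proof (induction x rule: vspan.induct)
  case (vspan_add_base x y)
  have "in_M J y" using in_M_vspan[OF assms(2)] vspan_add_base by blast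
  then have "times_t c (vadd x y) = vadd (times_t c x) (times_t c y)"
    using vspan_add_base assms by (intro times_t_vadd notin_Union_if_in_M) auto
  then show ?case using vspan_add_base by (auto intro: vspan.vspan_add_base)
qed (simp add: vspan.vspan_zero)

lemma vspan_if_singletons:
  assumes "finite J" "\<And>I. I \<subseteq> J \<Longrightarrow> {I} \<in> vspan B" "in_M J v"
  shows "v \<in> vspan B"
proof -
  have "finite v" using in_M_finite assms by blast
  then show ?thesis using assms(3)
  proof (induction v rule: finite_induct)
    case (insert I v)
    then have "insert I v = vadd {I} v" by (auto simp: vadd_def)
    moreover have "{I} \<in> vspan B" "v \<in> vspan B" using assms(2) insert by (auto simp: in_M_def)
    ultimately show ?case by (simp add: vspan_vadd)
  qed (simp add: vspan_zero)
qed

lemma vspan_image_vsumf: "x \<in> vspan (b ` A) \<Longrightarrow> \<exists>T\<subseteq>A. finite T \<and> vsumf b T = x"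
proof (induction x rule: vspan.induct)
  case vspan_zero
  show ?case by (intro exI[of _ "{}"]) auto
next
  case (vspan_add_base x y)
  then obtain i T where i: "i \<in> A" "x = b i" and T: "T \<subseteq> A" "finite T" "vsumf b T = y"
    by blast
  then have "vsumf b (sym_diff {i} T) = vadd x y" using vsumf_sym_diff[of "{i}" T b] by simp
  moreover have "sym_diff {i} T \<subseteq> A" "finite (sym_diff {i} T)" using T i by auto
  ultimately show ?case by blast
qed

definition decomp_gens :: "nat set \<Rightarrow> nat set \<Rightarrow> vec list \<Rightarrow> (vec \<Rightarrow> vec) list \<Rightarrow> vec set" where
  "decomp_gens J S fs ps =
    {lam_act J n f | f n. f \<in> set fs \<and> n < 4} \<union> {\<phi> {I} | \<phi> I. \<phi> \<in> set ps \<and> I \<subseteq> S}"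

text \<open>\<open>M_J = F \<oplus> \<Oplus>\<^sub>\<phi> \<phi>(M_S)\<close> with \<open>F\<close> free on \<open>fs\<close>. The
  last clause says that there are exactly \<open>dim M_J\<close> generators, which together with
  spanning makes them a basis.\<close>

definition is_decomposition :: "nat set \<Rightarrow> nat set \<Rightarrow> vec list \<Rightarrow> (vec \<Rightarrow> vec) list \<Rightarrow> bool" where
  "is_decomposition J S fs ps \<longleftrightarrow> finite J \<and> finite S
     \<and> (\<forall>f\<in>set fs. in_M J f) \<and> (\<forall>\<phi>\<in>set ps. is_hom S J \<phi>)
     \<and> (\<forall>I\<subseteq>J. {I} \<in> vspan (decomp_gens J S fs ps))
     \<and> 4 * length fs + 2 ^ card S * length ps = 2 ^ card J"

lemma lam_act_in_decomp_gens: "f \<in> set fs \<Longrightarrow> n < 4 \<Longrightarrow> lam_act J n f \<in> decomp_gens J S fs ps"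
  unfolding decomp_gens_def by blast

lemma hom_in_decomp_gens: "\<phi> \<in> set ps \<Longrightarrow> I \<subseteq> S \<Longrightarrow> \<phi> {I} \<in> decomp_gens J S fs ps"
  unfolding decomp_gens_def by blast

lemma decomp_gens_cases:
  assumes "x \<in> decomp_gens J S fs ps"
  obtains (free) f n where "f \<in> set fs" "n < 4" "x = lam_act J n f"
    | (hom) \<phi> I where "\<phi> \<in> set ps" "I \<subseteq> S" "x = \<phi> {I}"
  using assms unfolding decomp_gens_def by blast

lemma is_decomposition_in_M: "is_decomposition J S fs ps \<Longrightarrow> f \<in> set fs \<Longrightarrow> in_M J f"
  by (simp add: is_decomposition_def)

lemma is_decomposition_is_hom: "is_decomposition J S fs ps \<Longrightarrow> \<phi> \<in> set ps \<Longrightarrow> is_hom S J \<phi>"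
  by (simp add: is_decomposition_def)

lemma is_decomposition_singleton:
  "is_decomposition J S fs ps \<Longrightarrow> I \<subseteq> J \<Longrightarrow> {I} \<in> vspan (decomp_gens J S fs ps)"
  by (simp add: is_decomposition_def)

lemma in_M_decomp_gens:
  "is_decomposition J S fs ps \<Longrightarrow> decomp_gens J S fs ps \<subseteq> Collect (in_M J)"
  unfolding is_decomposition_def decomp_gens_def using in_M_lam_act is_hom_in_M
  by (fastforce simp: in_M_def)

definition tensor_fs :: "nat \<Rightarrow> vec list \<Rightarrow> (vec \<Rightarrow> vec) list \<Rightarrow> vec list \<Rightarrow> vec list" where
  "tensor_fs c fs ps fs0 = fs @ map (times_t c) fs @ concat (map (\<lambda>\<phi>. map (tensor_id c \<phi>) fs0) ps)"

definition tensor_ps ::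
    "nat \<Rightarrow> (vec \<Rightarrow> vec) list \<Rightarrow> (vec \<Rightarrow> vec) list \<Rightarrow> (vec \<Rightarrow> vec) list" where
  "tensor_ps c ps ps0 = concat (map (\<lambda>\<phi>. map (\<lambda>\<rho>. tensor_id c \<phi> \<circ> \<rho>) ps0) ps)"

lemma length_tensor_fs: "length (tensor_fs c fs ps fs0) = 2 * length fs + length ps * length fs0"
  by (simp add: tensor_fs_def length_concat comp_def sum_list_triv)

lemma length_tensor_ps: "length (tensor_ps c ps ps0) = length ps * length ps0"
  by (simp add: tensor_ps_def length_concat comp_def sum_list_triv)

text \<open>Tensoring a decomposition of \<open>M_J\<close> with \<open>M_c\<close>: \<open>F \<otimes> M_c\<close> is free on
  \<open>f \<otimes> x_c, f \<otimes> t_c\<close>, and each \<open>\<phi>(M_S) \<otimes> M_c\<close> is the image under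
  \<open>\<phi> \<otimes> id\<close> of a given decomposition of \<open>M_S \<otimes> M_c\<close>.\<close>

context
  fixes J S S' :: "nat set" and c :: nat and fs fs0 :: "vec list" and ps ps0 :: "(vec \<Rightarrow> vec) list"
  assumes dec: "is_decomposition J S fs ps"
    and dec0: "is_decomposition (insert c S) S' fs0 ps0"
    and c_notin_J: "c \<notin> J" and c_notin_S: "c \<notin> S"
begin

lemma is_hom_tensor_id_ps: "\<phi> \<in> set ps \<Longrightarrow> is_hom (insert c S) (insert c J) (tensor_id c \<phi>)"
  using dec c_notin_J c_notin_S by (intro is_hom_tensor_id) (auto simp: is_decomposition_def)

lemma tensor_free_in_vspan:
  assumes f: "f \<in> set fs" and n: "n < 4"
  shows "lam_act J n f \<in> vspan (decomp_gens (insert c J) S' (tensor_fs c fs ps fs0) (tensor_ps c ps ps0))"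
    and "times_t c (lam_act J n f)
      \<in> vspan (decomp_gens (insert c J) S' (tensor_fs c fs ps fs0) (tensor_ps c ps ps0))"
proof -
  let ?G = "decomp_gens (insert c J) S' (tensor_fs c fs ps fs0) (tensor_ps c ps ps0)"
  have fJ: "finite J" and fM: "in_M J f" using dec f by (auto simp: is_decomposition_def)
  have gen: "lam_act (insert c J) m g \<in> vspan ?G" if "g \<in> set fs \<or> g \<in> times_t c ` set fs" "m < 4" for g m
    unfolding decomp_gens_def tensor_fs_def using that by (intro vspan_base) auto
  have t: "times_t c (lam_act J m f) = lam_act (insert c J) m (times_t c f)" for m
    using lam_act_insert_t[OF fJ c_notin_J fM] by simp
  then show "times_t c (lam_act J n f) \<in> vspan ?G" using gen f n by simp
  have "times_t c (if n = 0 then {} else lam_act J (n - 1) f) \<in> vspan ?G"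
    using t gen f n by (simp add: vspan_zero)
  moreover have "lam_act J n f = vadd (lam_act (insert c J) n f)
      (times_t c (if n = 0 then {} else lam_act J (n - 1) f))"
    using lam_act_insert_x[OF fJ c_notin_J fM n] by (simp add: vadd_assoc)
  ultimately show "lam_act J n f \<in> vspan ?G" using vspan_vadd gen f n by metis
qed

lemma tensor_hom_in_vspan:
  assumes \<phi>: "\<phi> \<in> set ps" and K: "K \<subseteq> insert c S"
  shows "tensor_id c \<phi> {K}
    \<in> vspan (decomp_gens (insert c J) S' (tensor_fs c fs ps fs0) (tensor_ps c ps ps0))"
proof -
  let ?G = "decomp_gens (insert c J) S' (tensor_fs c fs ps fs0) (tensor_ps c ps ps0)"
  let ?H = "decomp_gens (insert c S) S' fs0 ps0"
  have hom: "is_hom (insert c S) (insert c J) (tensor_id c \<phi>)" using is_hom_tensor_id_ps[OF \<phi>] .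
  have K_span: "tensor_id c \<phi> {K} \<in> vspan (tensor_id c \<phi> ` ?H)"
    using is_hom_vspan[OF hom in_M_decomp_gens[OF dec0]] is_decomposition_singleton[OF dec0 K] .
  have "tensor_id c \<phi> x \<in> ?G" if x: "x \<in> ?H" for x
    using x
  proof (cases rule: decomp_gens_cases)
    case (free f n)
    then have "tensor_id c \<phi> x = lam_act (insert c J) n (tensor_id c \<phi> f)"
      using is_hom_lam_act[OF hom is_decomposition_in_M[OF dec0]] by simp
    moreover have "tensor_id c \<phi> f \<in> set (tensor_fs c fs ps fs0)"
      using free(1) \<phi> by (auto simp: tensor_fs_def)
    ultimately show "tensor_id c \<phi> x \<in> ?G" using free(2) by (simp add: lam_act_in_decomp_gens)
  next
    case (hom \<rho> I)
    then have "tensor_id c \<phi> \<circ> \<rho> \<in> set (tensor_ps c ps ps0)"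
      using \<phi> by (auto simp: tensor_ps_def)
    then show "tensor_id c \<phi> x \<in> ?G" using hom hom_in_decomp_gens[of "tensor_id c \<phi> \<circ> \<rho>"] by simp
  qed
  then have "tensor_id c \<phi> ` ?H \<subseteq> vspan ?G" by (auto intro: vspan_base)
  then show ?thesis using K_span by (rule vspan_subset)
qed

lemma decomp_gens_in_vspan:
  assumes x: "x \<in> decomp_gens J S fs ps"
  shows "x \<in> vspan (decomp_gens (insert c J) S' (tensor_fs c fs ps fs0) (tensor_ps c ps ps0))
    \<and> times_t c x \<in> vspan (decomp_gens (insert c J) S' (tensor_fs c fs ps fs0) (tensor_ps c ps ps0))"
  using x
proof (cases rule: decomp_gens_cases)
  case (free f n)
  then show ?thesis using tensor_free_in_vspan by simp
next
  case (hom \<phi> I)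
  have fin: "finite S" "finite J" using dec by (simp_all add: is_decomposition_def)
  note singleton = tensor_id_singleton_x tensor_id_singleton_t
  note singleton = singleton[OF fin c_notin_S c_notin_J is_decomposition_is_hom[OF dec hom(1)] hom(2)]
  show ?thesis
    using tensor_hom_in_vspan[OF hom(1), of I] tensor_hom_in_vspan[OF hom(1), of "insert c I"]
      singleton hom by auto
qed

lemma singleton_in_vspan_tensor:
  assumes I: "I \<subseteq> insert c J"
  shows "{I} \<in> vspan (decomp_gens (insert c J) S' (tensor_fs c fs ps fs0) (tensor_ps c ps ps0))"
proof (cases "c \<in> I")
  case False
  then have "{I} \<in> vspan (decomp_gens J S fs ps)" using I by (intro is_decomposition_singleton[OF dec]) auto
  moreover have "decomp_gens J S fs ps
      \<subseteq> vspan (decomp_gens (insert c J) S' (tensor_fs c fs ps fs0) (tensor_ps c ps ps0))"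
    using decomp_gens_in_vspan by blast
  ultimately show ?thesis using vspan_subset by blast
next
  case True
  have "{I - {c}} \<in> vspan (decomp_gens J S fs ps)"
    using I by (intro is_decomposition_singleton[OF dec]) auto
  then have "times_t c {I - {c}} \<in> vspan (times_t c ` decomp_gens J S fs ps)"
    by (rule times_t_vspan[OF c_notin_J in_M_decomp_gens[OF dec]])
  moreover have "times_t c {I - {c}} = {I}" using True by auto
  moreover have "times_t c ` decomp_gens J S fs ps
      \<subseteq> vspan (decomp_gens (insert c J) S' (tensor_fs c fs ps fs0) (tensor_ps c ps ps0))"
    using decomp_gens_in_vspan by blast
  ultimately show ?thesis using vspan_subset by metis
qed

lemma card_tensor:
  "4 * length (tensor_fs c fs ps fs0) + 2 ^ card S' * length (tensor_ps c ps ps0) = 2 ^ card (insert c J)"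
proof -
  have fin: "finite J" "finite S" using dec by (simp_all add: is_decomposition_def)
  have cnt: "4 * length fs + 2 ^ card S * length ps = 2 ^ card J"
    and cnt0: "4 * length fs0 + 2 ^ card S' * length ps0 = 2 * 2 ^ card S"
    using dec dec0 fin c_notin_S by (simp_all add: is_decomposition_def)
  have "4 * length (tensor_fs c fs ps fs0) + 2 ^ card S' * length (tensor_ps c ps ps0)
      = 8 * length fs + length ps * (4 * length fs0 + 2 ^ card S' * length ps0)"
    by (simp add: length_tensor_fs length_tensor_ps algebra_simps)
  also have "\<dots> = 8 * length fs + length ps * (2 * 2 ^ card S)"
    by (simp only: cnt0)
  also have "\<dots> = 2 * (4 * length fs + 2 ^ card S * length ps)"
    by (simp add: algebra_simps)
  finally show ?thesis using cnt fin c_notin_J by simp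
qed

lemma is_decomposition_tensor:
  "is_decomposition (insert c J) S' (tensor_fs c fs ps fs0) (tensor_ps c ps ps0)"
  unfolding is_decomposition_def
proof (intro conjI ballI allI impI)
  show "finite (insert c J)" "finite S'" using dec dec0 by (simp_all add: is_decomposition_def)
  fix f assume "f \<in> set (tensor_fs c fs ps fs0)"
  then consider "f \<in> set fs" | f' where "f' \<in> set fs" "f = times_t c f'"
    | \<phi> f0 where "\<phi> \<in> set ps" "f0 \<in> set fs0" "f = tensor_id c \<phi> f0"
    by (auto simp: tensor_fs_def)
  then show "in_M (insert c J) f"
    by cases (auto intro: in_M_mono in_M_times_t is_decomposition_in_M[OF dec]
        is_hom_in_M[OF is_hom_tensor_id_ps] is_decomposition_in_M[OF dec0])
next
  fix \<chi> assume "\<chi> \<in> set (tensor_ps c ps ps0)"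
  then obtain \<phi> \<rho> where "\<phi> \<in> set ps" "\<rho> \<in> set ps0" "\<chi> = tensor_id c \<phi> \<circ> \<rho>"
    by (auto simp: tensor_ps_def)
  then show "is_hom S' (insert c J) \<chi>"
    using is_hom_comp is_decomposition_is_hom[OF dec0] is_hom_tensor_id_ps by blast
qed (use singleton_in_vspan_tensor card_tensor in auto)

end

section \<open>Reduced length\<close>

definition shifts_length :: "nat set \<Rightarrow> nat set \<Rightarrow> nat \<Rightarrow> (vec \<Rightarrow> vec) \<Rightarrow> bool" where
  "shifts_length S J d \<phi> \<longleftrightarrow> (\<forall>I\<subseteq>S. homog J (card (S - I) + d) (\<phi> {I}))"

lemma homog_vsumf: "(\<And>i. i \<in> T \<Longrightarrow> homog J l (b i)) \<Longrightarrow> homog J l (vsumf b T)"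
  unfolding homog_def using in_M_vsumf vsumf_subset_UN by (metis (no_types, lifting) UN_E subsetD)

lemma homog_insert_x:
  assumes "finite J" "c \<notin> J" "homog J l v"
  shows "homog (insert c J) (Suc l) v"
  unfolding homog_def
proof (intro conjI ballI)
  show "in_M (insert c J) v" using assms by (auto simp: homog_def in_M_def)
  fix I assume "I \<in> v"
  then have "I \<subseteq> J" "card (J - I) = l" using assms by (auto simp: homog_def in_M_def)
  moreover have "insert c J - I = insert c (J - I)" using assms calculation by auto
  ultimately show "card (insert c J - I) = Suc l" using assms by simp
qed

lemma homog_times_t:
  assumes "c \<notin> J" "homog J l v"
  shows "homog (insert c J) l (times_t c v)"
  unfolding homog_def
proof (intro conjI ballI)
  show "in_M (insert c J) (times_t c v)" using assms in_M_times_t by (auto simp: homog_def)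
  fix K assume "K \<in> times_t c v"
  then obtain I where I: "I \<in> v" "K = insert c I" by (auto simp: times_t_def)
  then have "I \<subseteq> J" "card (J - I) = l" using assms by (auto simp: homog_def in_M_def)
  moreover have "insert c J - K = J - I" using I assms calculation by auto
  ultimately show "card (insert c J - K) = l" by simp
qed

lemma homog_tensor_id_singleton:
  assumes fS: "finite S" and fJ: "finite J" and cS: "c \<notin> S" and cJ: "c \<notin> J"
    and hom: "is_hom S J \<phi>" and shift: "shifts_length S J d \<phi>" and K: "K \<subseteq> insert c S"
  shows "homog (insert c J) (card (insert c S - K) + d) (tensor_id c \<phi> {K})"
proof (cases "c \<in> K")
  case False
  then have KS: "K \<subseteq> S" using K by auto
  then have "homog J (card (S - K) + d) (\<phi> {K})" using shift by (simp add: shifts_length_def)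
  then have "homog (insert c J) (Suc (card (S - K) + d)) (\<phi> {K})" by (rule homog_insert_x[OF fJ cJ])
  moreover have "insert c S - K = insert c (S - K)" using False by auto
  ultimately show ?thesis using tensor_id_singleton_x[OF fS fJ cS cJ hom KS] fS cS by simp
next
  case True
  define K' where "K' = K - {c}"
  have KS: "K' \<subseteq> S" and K_eq: "K = insert c K'" using K True by (auto simp: K'_def)
  have "homog J (card (S - K') + d) (\<phi> {K'})" using shift KS by (simp add: shifts_length_def)
  then have "homog (insert c J) (card (S - K') + d) (times_t c (\<phi> {K'}))" by (rule homog_times_t[OF cJ])
  moreover have "insert c S - K = S - K'" using True cS by (auto simp: K'_def)
  ultimately show ?thesis using tensor_id_singleton_t[OF fS fJ cS cJ hom KS] K_eq by simp
qed

lemma shifts_length_tensor: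
  assumes fS: "finite S" and fJ: "finite J" and cS: "c \<notin> S" and cJ: "c \<notin> J"
    and hom: "is_hom S J \<phi>" and shift: "shifts_length S J d \<phi>"
    and hom0: "is_hom S' (insert c S) \<rho>" and shift0: "shifts_length S' (insert c S) d0 \<rho>"
  shows "shifts_length S' (insert c J) (d0 + d) (tensor_id c \<phi> \<circ> \<rho>)"
  unfolding shifts_length_def
proof (intro allI impI)
  fix I assume "I \<subseteq> S'"
  define l v where "l = card (S' - I) + d0" and "v = \<rho> {I}"
  have v: "homog (insert c S) l v" using shift0 \<open>I \<subseteq> S'\<close> by (simp add: shifts_length_def l_def v_def)
  then have fv: "finite v" using in_M_finite[of "insert c S" v] fS by (simp add: homog_def)
  have "tensor_id c \<phi> v = tensor_id c \<phi> (vsumf (\<lambda>K. {K}) v)" by (simp add: vsumf_singletons[OF fv])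
  also have "\<dots> = vsumf (\<lambda>K. tensor_id c \<phi> {K}) v"
    using v by (intro is_hom_vsumf[OF is_hom_tensor_id[OF fS fJ cS cJ hom] fv])
      (auto simp: homog_def in_M_def)
  finally have "tensor_id c \<phi> v = vsumf (\<lambda>K. tensor_id c \<phi> {K}) v" .
  moreover have "homog (insert c J) (l + d) (tensor_id c \<phi> {K})" if "K \<in> v" for K
    using homog_tensor_id_singleton[OF fS fJ cS cJ hom shift] v that
    by (auto simp: homog_def in_M_def)
  ultimately have "homog (insert c J) (l + d) (tensor_id c \<phi> v)"
    by (simp add: homog_vsumf)
  then show "homog (insert c J) (card (S' - I) + (d0 + d)) ((tensor_id c \<phi> \<circ> \<rho>) {I})"
    by (simp add: l_def v_def add.assoc)
qed

section \<open>The two small cases\<close>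

lemma Qb_image:
  assumes "inj_on h S" "I \<subseteq> S"
  shows "Qb (h ` S) (h ` I) = image h ` Qb S I"
proof -
  have "h ` S - h ` I = h ` (S - I)" using assms by (simp add: inj_on_image_set_diff)
  then show ?thesis by (simp add: Qb_eq_image image_image)
qed

lemma Pb_image:
  assumes "inj_on h S" "I \<subseteq> S"
  shows "Pb (h ` S) (h ` I) = image h ` Pb S I"
proof -
  have d: "h ` S - h ` I = h ` (S - I)" using assms by (simp add: inj_on_image_set_diff)
  have "image h ` Pb S I = {h ` I \<union> {h j, h j'} | j j'. j \<in> S - I \<and> j' \<in> S - I \<and> j \<noteq> j'}"
  proof (intro equalityI subsetI)
    fix K assume "K \<in> image h ` Pb S I"
    then show "K \<in> {h ` I \<union> {h j, h j'} | j j'. j \<in> S - I \<and> j' \<in> S - I \<and> j \<noteq> j'}"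
      by (auto simp: Pb_def)
  next
    fix K assume "K \<in> {h ` I \<union> {h j, h j'} | j j'. j \<in> S - I \<and> j' \<in> S - I \<and> j \<noteq> j'}"
    then obtain j j' where "K = h ` (I \<union> {j, j'})" "j \<in> S - I" "j' \<in> S - I" "j \<noteq> j'" by auto
    moreover have "I \<union> {j, j'} \<in> Pb S I" using \<open>j \<in> S - I\<close> \<open>j' \<in> S - I\<close> \<open>j \<noteq> j'\<close>
      unfolding Pb_def by blast
    ultimately show "K \<in> image h ` Pb S I" by blast
  qed
  also have "\<dots> = Pb (h ` S) (h ` I)"
    unfolding Pb_def d using inj_onD[OF assms(1)] by blast
  finally show ?thesis by simp
qed

definition relabel :: "(nat \<Rightarrow> nat) \<Rightarrow> vec \<Rightarrow> vec" where
  "relabel h = vsumf (\<lambda>I. {h ` I})"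

lemma relabel_singleton [simp]: "relabel h {I} = {h ` I}"
  by (simp add: relabel_def)

lemma is_hom_relabel:
  assumes fS: "finite S" and inj: "inj_on h S"
  shows "is_hom S (h ` S) (relabel h)"
  unfolding relabel_def
proof (rule is_hom_vsumf_extension)
  fix I assume I: "I \<subseteq> S"
  have inj_Pow: "inj_on (image h) (Pow S)" using inj by (rule inj_on_image_Pow)
  have "vsumf (\<lambda>I. {h ` I}) (Qb S I) = image h ` Qb S I"
    using fS in_M_Qb[OF I] by (intro vsumf_singletons_inj inj_on_subset[OF inj_Pow]) (auto simp: in_M_def)
  then show "vsumf (\<lambda>I. {h ` I}) (Qb S I) = Qop (h ` S) {h ` I}"
    using Qb_image[OF inj I] by simp
  have "vsumf (\<lambda>I. {h ` I}) (Pb S I) = image h ` Pb S I"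
    using fS in_M_Pb[OF I] by (intro vsumf_singletons_inj inj_on_subset[OF inj_Pow]) (auto simp: in_M_def)
  then show "vsumf (\<lambda>I. {h ` I}) (Pb S I) = Pop (h ` S) {h ` I}"
    using Pb_image[OF inj I] by simp
qed (use fS in auto)

lemma is_decomposition_relabel:
  assumes fS: "finite S" and inj: "inj_on h S"
  shows "is_decomposition (h ` S) S [] [relabel h]" and "shifts_length S (h ` S) 0 (relabel h)"
proof -
  have "{K} \<in> vspan (decomp_gens (h ` S) S [] [relabel h])" if "K \<subseteq> h ` S" for K
  proof -
    obtain I where "I \<subseteq> S" "K = h ` I" using \<open>K \<subseteq> h ` S\<close> by (auto simp: subset_image_iff)
    then show ?thesis using hom_in_decomp_gens[of "relabel h" "[relabel h]" I S] by (simp add: vspan_base)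
  qed
  then show "is_decomposition (h ` S) S [] [relabel h]"
    using fS is_hom_relabel[OF fS inj] card_image[OF inj] by (simp add: is_decomposition_def)
  have "card (h ` S - h ` I) = card (S - I)" if "I \<subseteq> S" for I
  proof -
    have "h ` S - h ` I = h ` (S - I)" using inj that by (simp add: inj_on_image_set_diff)
    then show ?thesis using inj by (simp add: card_image inj_on_diff)
  qed
  then show "shifts_length S (h ` S) 0 (relabel h)"
    by (auto simp: shifts_length_def homog_def in_M_def)
qed

text \<open>Two embeddings of \<open>M_{a}\<close> into \<open>M_{a,b,c}\<close>: \<open>tensor_split0\<close> sends
  \<open>x_a\<close> to \<open>t_a x_b x_c + x_a t_b x_c\<close>, \<open>tensor_split1\<close> sends it to
  \<open>x_a t_b x_c + x_a x_b t_c\<close>. With the free summand on \<open>x_a x_b x_c\<close> they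
  decompose \<open>M_{a,b} \<otimes> M_c\<close>.\<close>

definition tensor_split0 :: "nat \<Rightarrow> nat \<Rightarrow> nat \<Rightarrow> vec \<Rightarrow> vec" where
  "tensor_split0 a b c = vsumf (\<lambda>I. if I = {} then {{a}, {b}} else {{a, c}, {b, c}})"

definition tensor_split1 :: "nat \<Rightarrow> nat \<Rightarrow> nat \<Rightarrow> vec \<Rightarrow> vec" where
  "tensor_split1 a b c = vsumf (\<lambda>I. if I = {} then {{b}, {c}} else {{a, b}, {a, c}})"

lemma Qb_Pb_singleton: "Qb {a} {} = {{a}}" "Qb {a} {a} = {}" "Pb {a} I = {}"
  by (auto simp: Qb_def Pb_def)

lemma subset_three_cases:
  "I \<subseteq> {a, b, c} \<Longrightarrow>
    I = {} \<or> I = {a} \<or> I = {b} \<or> I = {c} \<or> I = {a, b} \<or> I = {a, c} \<or> I = {b, c} \<or> I = {a, b, c}"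
  using Pow_iff[of I "{a, b, c}"] by (simp add: Pow_insert insert_commute)

context
  fixes a b c :: nat
  assumes ab: "a \<noteq> b" and ac: "a \<noteq> c" and bc: "b \<noteq> c"
begin

lemma Qb_three_points:
  "Qb {a, b, c} {} = {{a}, {b}, {c}}"
  "Qb {a, b, c} {a} = {{a, b}, {a, c}}" "Qb {a, b, c} {b} = {{a, b}, {b, c}}"
  "Qb {a, b, c} {c} = {{a, c}, {b, c}}"
  "Qb {a, b, c} {a, b} = {{a, b, c}}" "Qb {a, b, c} {a, c} = {{a, b, c}}"
  "Qb {a, b, c} {b, c} = {{a, b, c}}"
  using ab ac bc by (auto simp: Qb_def)

lemma Pb_three_points:
  "Pb {a, b, c} {} = {{a, b}, {a, c}, {b, c}}"
  "Pb {a, b, c} {a} = {{a, b, c}}" "Pb {a, b, c} {b} = {{a, b, c}}" "Pb {a, b, c} {c} = {{a, b, c}}"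
  "Pb {a, b, c} {a, b} = {}" "Pb {a, b, c} {a, c} = {}" "Pb {a, b, c} {b, c} = {}"
  using ab ac bc by (auto simp: Pb_def)

lemma is_hom_tensor_split0: "is_hom {a} {a, b, c} (tensor_split0 a b c)"
  unfolding tensor_split0_def
proof (rule is_hom_vsumf_extension)
  fix I :: "nat set" assume "I \<subseteq> {a}"
  then consider "I = {}" | "I = {a}" by auto
  then show "vsumf (\<lambda>I. if I = {} then {{a}, {b}} else {{a, c}, {b, c}}) (Qb {a} I) = Qop {a, b, c} (if I = {} then {{a}, {b}} else {{a, c}, {b, c}})"
    and "vsumf (\<lambda>I. if I = {} then {{a}, {b}} else {{a, c}, {b, c}}) (Pb {a} I) = Pop {a, b, c} (if I = {} then {{a}, {b}} else {{a, c}, {b, c}})"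
    by (cases; use ab ac bc in \<open>simp add: Qop_def Pop_def vsumf_insert Qb_Pb_singleton Qb_three_points
        Pb_three_points vadd_def doubleton_eq_iff insert_Diff_if\<close>)+
qed (auto simp: in_M_def)

lemma is_hom_tensor_split1: "is_hom {a} {a, b, c} (tensor_split1 a b c)"
  unfolding tensor_split1_def
proof (rule is_hom_vsumf_extension)
  fix I :: "nat set" assume "I \<subseteq> {a}"
  then consider "I = {}" | "I = {a}" by auto
  then show "vsumf (\<lambda>I. if I = {} then {{b}, {c}} else {{a, b}, {a, c}}) (Qb {a} I) = Qop {a, b, c} (if I = {} then {{b}, {c}} else {{a, b}, {a, c}})"
    and "vsumf (\<lambda>I. if I = {} then {{b}, {c}} else {{a, b}, {a, c}}) (Pb {a} I) = Pop {a, b, c} (if I = {} then {{b}, {c}} else {{a, b}, {a, c}})"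
    by (cases; use ab ac bc in \<open>simp add: Qop_def Pop_def vsumf_insert Qb_Pb_singleton Qb_three_points
        Pb_three_points vadd_def doubleton_eq_iff insert_Diff_if\<close>)+
qed (auto simp: in_M_def)

lemma singleton_in_vspan_tensor_split:
  assumes I: "I \<subseteq> {a, b, c}"
  shows "{I} \<in> vspan (decomp_gens {a, b, c} {a} [{{}}] [tensor_split0 a b c, tensor_split1 a b c])"
proof -
  let ?G = "decomp_gens {a, b, c} {a} [{{}}] [tensor_split0 a b c, tensor_split1 a b c]"
  have free: "lam_act {a, b, c} n {{}} \<in> vspan ?G" if "n < 4" for n
    using that by (intro vspan_base lam_act_in_decomp_gens) auto
  have hom: "\<phi> {J} \<in> vspan ?G" if "\<phi> \<in> {tensor_split0 a b c, tensor_split1 a b c}" "J \<subseteq> {a}" for \<phi> J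
    using that by (intro vspan_base hom_in_decomp_gens) auto
  have Q: "{{a}, {b}, {c}} \<in> vspan ?G" and P: "{{a, b}, {a, c}, {b, c}} \<in> vspan ?G"
    and QP: "{{a, b, c}} \<in> vspan ?G"
    using free[of 1] free[of 2] free[of 3] ab ac bc
    by (simp_all add: lam_act_def Qop_def Pop_def vsumf_insert Qb_three_points Pb_three_points
        vadd_def doubleton_eq_iff insert_Diff_if)
  have s0: "{{a}, {b}} \<in> vspan ?G" "{{a, c}, {b, c}} \<in> vspan ?G"
    using hom[of "tensor_split0 a b c" "{}"] hom[of "tensor_split0 a b c" "{a}"]
    by (simp_all add: tensor_split0_def)
  have s1: "{{b}, {c}} \<in> vspan ?G" "{{a, b}, {a, c}} \<in> vspan ?G"
    using hom[of "tensor_split1 a b c" "{}"] hom[of "tensor_split1 a b c" "{a}"]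
    by (simp_all add: tensor_split1_def)
  have e: "{{a}} = vadd {{a}, {b}, {c}} {{b}, {c}}"
    "{{b}} = vadd {{a}, {b}, {c}} (vadd {{a}, {b}} {{b}, {c}})"
    "{{c}} = vadd {{a}, {b}, {c}} {{a}, {b}}"
    "{{a, b}} = vadd {{a, b}, {a, c}, {b, c}} {{a, c}, {b, c}}"
    "{{a, c}} = vadd {{a, b}, {a, c}, {b, c}} (vadd {{a, c}, {b, c}} {{a, b}, {a, c}})"
    "{{b, c}} = vadd {{a, b}, {a, c}, {b, c}} {{a, b}, {a, c}}"
    using ab ac bc by (simp_all add: vadd_def doubleton_eq_iff insert_Diff_if insert_commute)
  have "{{}} \<in> vspan ?G" using free[of 0] by (simp add: lam_act_def)
  moreover have "{{a}} \<in> vspan ?G" by (subst e(1)) (intro vspan_vadd Q s1)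
  moreover have "{{b}} \<in> vspan ?G" by (subst e(2)) (intro vspan_vadd Q s0 s1)
  moreover have "{{c}} \<in> vspan ?G" by (subst e(3)) (intro vspan_vadd Q s0)
  moreover have "{{a, b}} \<in> vspan ?G" by (subst e(4)) (intro vspan_vadd P s0)
  moreover have "{{a, c}} \<in> vspan ?G" by (subst e(5)) (intro vspan_vadd P s0 s1)
  moreover have "{{b, c}} \<in> vspan ?G" by (subst e(6)) (intro vspan_vadd P s1)
  ultimately show ?thesis using subset_three_cases[OF I] QP by (elim disjE) simp_all
qed

lemma is_decomposition_tensor_split:
  "is_decomposition {a, b, c} {a} [{{}}] [tensor_split0 a b c, tensor_split1 a b c]"
  using is_hom_tensor_split0 is_hom_tensor_split1 singleton_in_vspan_tensor_split ab ac bc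
  by (simp add: is_decomposition_def)

lemma shifts_length_tensor_split:
  "shifts_length {a} {a, b, c} 1 (tensor_split0 a b c)"
  "shifts_length {a} {a, b, c} 1 (tensor_split1 a b c)"
  using ab ac bc by (auto simp: shifts_length_def homog_def in_M_def tensor_split0_def
      tensor_split1_def subset_singleton_iff insert_Diff_if)

end

section \<open>Decomposition of \<open>M_[k]\<close>\<close>

lemma shifts_length_tensor_ps:
  assumes dec: "is_decomposition J S fs ps" and shift: "\<forall>\<phi>\<in>set ps. shifts_length S J d \<phi>"
    and dec0: "is_decomposition (insert c S) S' fs0 ps0"
    and shift0: "\<forall>\<rho>\<in>set ps0. shifts_length S' (insert c S) d0 \<rho>"
    and "c \<notin> J" "c \<notin> S"
  shows "\<forall>\<chi>\<in>set (tensor_ps c ps ps0). shifts_length S' (insert c J) (d0 + d) \<chi>"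
proof
  fix \<chi> assume "\<chi> \<in> set (tensor_ps c ps ps0)"
  then obtain \<phi> \<rho> where "\<phi> \<in> set ps" "\<rho> \<in> set ps0" "\<chi> = tensor_id c \<phi> \<circ> \<rho>"
    by (auto simp: tensor_ps_def)
  moreover have "finite S" "finite J"
    using dec by (simp_all add: is_decomposition_def)
  ultimately show "shifts_length S' (insert c J) (d0 + d) \<chi>"
    using shifts_length_tensor[of S J c \<phi> d S' \<rho> d0] assms
      is_decomposition_is_hom[OF dec] is_decomposition_is_hom[OF dec0] by simp
qed

lemma decomposition_interval:
  "\<exists>fs ps. is_decomposition {1..n+1} (if even n then {1} else {1, 2}) fs ps
     \<and> (\<forall>\<phi>\<in>set ps. shifts_length (if even n then {1} else {1, 2}) {1..n+1} (n div 2) \<phi>)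
     \<and> length ps = 2 ^ (n div 2)"
proof (induction n)
  case 0
  show ?case
    using is_decomposition_relabel[of "{1}" id] by (intro exI[of _ "[]"] exI[of _ "[relabel id]"]) simp
next
  case (Suc n)
  then obtain fs ps where dec: "is_decomposition {1..n+1} (if even n then {1} else {1, 2}) fs ps"
    and shift: "\<forall>\<phi>\<in>set ps. shifts_length (if even n then {1} else {1, 2}) {1..n+1} (n div 2) \<phi>"
    and len: "length ps = 2 ^ (n div 2)" by blast
  define c where "c = n + 2"
  have J: "{1..Suc n + 1} = insert c {1..n+1}" and c_notin: "c \<notin> {1..n+1}"
    by (auto simp: c_def)
  show ?case
  proof (cases "even n")
    case True
    define h where "h = (\<lambda>j. if j = 2 then c else j)"
    have inj: "inj_on h {1, 2}" and h: "h ` {1, 2} = insert c {1}"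
      by (auto simp: h_def c_def inj_on_def)
    note dec0 = is_decomposition_relabel[OF _ inj, unfolded h]
    have "is_decomposition (insert c {1..n+1}) {1, 2} (tensor_fs c fs ps []) (tensor_ps c ps [relabel h])"
      using dec dec0 True c_notin by (intro is_decomposition_tensor) (auto simp: c_def)
    moreover have "\<forall>\<chi>\<in>set (tensor_ps c ps [relabel h]). shifts_length {1, 2} (insert c {1..n+1}) (0 + n div 2) \<chi>"
      using dec shift dec0 True c_notin by (intro shifts_length_tensor_ps) (auto simp: c_def)
    moreover have "Suc n div 2 = n div 2" using True by presburger
    ultimately show ?thesis using True len J
      by (intro exI[of _ "tensor_fs c fs ps []"] exI[of _ "tensor_ps c ps [relabel h]"])
        (simp add: length_tensor_ps)
  next
    case False
    then have "n \<noteq> 0" by presburger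
    then have c12: "c \<noteq> 1" "c \<noteq> 2" and M3: "{1, 2, c} = insert c {1, 2}" by (auto simp: c_def)
    note dec0 = is_decomposition_tensor_split[of 1 2 c, unfolded M3]
    note shift0 = shifts_length_tensor_split[of 1 2 c, unfolded M3]
    have "is_decomposition (insert c {1..n+1}) {1}
        (tensor_fs c fs ps [{{}}]) (tensor_ps c ps [tensor_split0 1 2 c, tensor_split1 1 2 c])"
      using dec dec0 False c_notin c12 by (intro is_decomposition_tensor) auto
    moreover have "\<forall>\<chi>\<in>set (tensor_ps c ps [tensor_split0 1 2 c, tensor_split1 1 2 c]).
        shifts_length {1} (insert c {1..n+1}) (1 + n div 2) \<chi>"
      using dec shift dec0 shift0 False c_notin c12 by (intro shifts_length_tensor_ps) auto
    moreover have "Suc n div 2 = 1 + n div 2" using False by presburger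
    ultimately show ?thesis using False len J
      by (intro exI[of _ "tensor_fs c fs ps [{{}}]"]
          exI[of _ "tensor_ps c ps [tensor_split0 1 2 c, tensor_split1 1 2 c]"])
        (simp add: length_tensor_ps)
  qed
qed

lemma is_basis_if_spans:
  assumes fin: "finite A" and card: "card A = 2 ^ card J" and fin_J: "finite J"
    and M: "\<And>x. x \<in> A \<Longrightarrow> in_M J (b x)"
    and span: "\<And>v. in_M J v \<Longrightarrow> v \<in> vspan (b ` A)"
  shows "is_basis J b A"
proof -
  have onto: "vsumf b ` Pow A = Pow (Pow J)"
  proof
    have "in_M J (vsumf b T)" if "T \<subseteq> A" for T using M that by (intro in_M_vsumf) auto
    then show "vsumf b ` Pow A \<subseteq> Pow (Pow J)" by (auto simp: in_M_def)
    show "Pow (Pow J) \<subseteq> vsumf b ` Pow A"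
    proof
      fix v assume "v \<in> Pow (Pow J)"
      then have "in_M J v" by (simp add: in_M_def)
      then obtain T where "T \<subseteq> A" "vsumf b T = v" using vspan_image_vsumf[OF span] by blast
      then show "v \<in> vsumf b ` Pow A" by blast
    qed
  qed
  have "card (vsumf b ` Pow A) = card (Pow A)"
    unfolding onto using fin fin_J card by (simp add: card_Pow)
  then have inj: "inj_on (vsumf b) (Pow A)" using fin by (simp add: inj_on_iff_eq_card)
  have "vsumf b T \<noteq> vzero" if "T \<subseteq> A" "T \<noteq> {}" for T
    using inj_onD[OF inj, of T "{}"] that by (auto simp: vzero_def)
  moreover have "\<exists>T\<subseteq>A. vsumf b T = v" if "in_M J v" for v
    using vspan_image_vsumf[OF span[OF that]] by blast
  ultimately show ?thesis using fin M by (simp add: is_basis_def)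
qed

lemma is_decomposition_basis:
  assumes dec: "is_decomposition J S fs ps"
  shows "is_basis J (\<lambda>x. case x of Inl (a, n) \<Rightarrow> lam_act J n (fs ! a) | Inr (i, I) \<Rightarrow> (ps ! i) {I})
    ({Inl (a, n) | a n. a < length fs \<and> n < 4} \<union> {Inr (i, I) | i I. i < length ps \<and> I \<subseteq> S})"
    (is "is_basis J ?b ?A")
proof (rule is_basis_if_spans)
  have fin: "finite J" "finite S" using dec by (simp_all add: is_decomposition_def)
  have A: "?A = Inl ` ({..<length fs} \<times> {..<4}) \<union> Inr ` ({..<length ps} \<times> Pow S)" by auto
  show "finite ?A" unfolding A using fin by simp
  have "card ?A = card (Inl ` ({..<length fs} \<times> {..<4::nat}) :: (nat \<times> nat + nat \<times> nat set) set)
      + card (Inr ` ({..<length ps} \<times> Pow S) :: (nat \<times> nat + nat \<times> nat set) set)"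
    unfolding A using fin by (intro card_Un_disjoint) auto
  also have "\<dots> = 4 * length fs + 2 ^ card S * length ps"
    using fin by (simp add: card_image card_cartesian_product card_Pow)
  finally show "card ?A = 2 ^ card J" using dec by (simp add: is_decomposition_def)
  show "finite J" using fin by simp
  show "in_M J (?b x)" if "x \<in> ?A" for x
  proof -
    from that consider a n where "x = Inl (a, n)" "a < length fs" "n < 4"
      | i I where "x = Inr (i, I)" "i < length ps" "I \<subseteq> S" by blast
    then show ?thesis
      by cases (simp_all add: in_M_lam_act is_decomposition_in_M[OF dec]
          is_hom_in_M[OF is_decomposition_is_hom[OF dec]])
  qed
  have "decomp_gens J S fs ps \<subseteq> ?b ` ?A"
  proof
    fix x assume "x \<in> decomp_gens J S fs ps"
    then show "x \<in> ?b ` ?A"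
    proof (cases rule: decomp_gens_cases)
      case (free f n)
      then obtain a where "a < length fs" "f = fs ! a" by (auto simp: in_set_conv_nth)
      then show ?thesis using free by (intro image_eqI[of _ _ "Inl (a, n)"]) auto
    next
      case (hom \<phi> I)
      then obtain i where "i < length ps" "\<phi> = ps ! i" by (auto simp: in_set_conv_nth)
      then show ?thesis using hom by (intro image_eqI[of _ _ "Inr (i, I)"]) auto
    qed
  qed
  then have "{I} \<in> vspan (?b ` ?A)" if "I \<subseteq> J" for I
    using vspan_subset is_decomposition_singleton[OF dec that] vspan_base by (meson subset_iff)
  then show "v \<in> vspan (?b ` ?A)" if "in_M J v" for v
    by (rule vspan_if_singletons[OF fin(1) _ that])
qed

lemma is_basis_reindex:
  assumes basis: "is_basis J b A" and bij: "bij_betw h A' A"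
    and eq: "\<And>x. x \<in> A' \<Longrightarrow> b' x = b (h x)"
  shows "is_basis J b' A'"
proof -
  have sum: "vsumf b' T = vsumf b (h ` T)" if "T \<subseteq> A'" for T
  proof -
    have "inj_on h T" using bij_betw_imp_inj_on[OF bij] that by (rule inj_on_subset)
    then show ?thesis using eq that by (simp add: vsumf_image subset_iff cong: vsumf_cong)
  qed
  have hA: "h ` T \<subseteq> A" if "T \<subseteq> A'" for T using bij that by (auto simp: bij_betw_def)
  have "finite A'" using basis bij bij_betw_finite by (auto simp: is_basis_def)
  moreover have "in_M J (b' x)" if "x \<in> A'" for x
    using basis hA[of "{x}"] eq that by (auto simp: is_basis_def)
  moreover have "vsumf b' T \<noteq> vzero" if "T \<subseteq> A'" "T \<noteq> {}" for T
    using basis sum hA that by (simp add: is_basis_def)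
  moreover have "\<exists>T\<subseteq>A'. vsumf b' T = v" if v: "in_M J v" for v
  proof -
    obtain T where T: "T \<subseteq> A" "vsumf b T = v" using basis v unfolding is_basis_def by blast
    have "h ` (A' \<inter> h -` T) = T" using bij T(1) by (auto simp: bij_betw_def)
    then show ?thesis using sum[of "A' \<inter> h -` T"] T by (intro exI[of _ "A' \<inter> h -` T"]) auto
  qed
  ultimately show ?thesis by (simp add: is_basis_def)
qed

lemma is_hom_from_singleton:
  assumes "is_hom {a} J \<phi>"
  shows "\<phi> {{a}} = Qop J (\<phi> {{}})" and "Pop J (\<phi> {{}}) = {}"
proof -
  have "Qop {a} {{}} = {{a}}" "Pop {a} {{}} = {}" by (auto simp: Qb_def Pb_def)
  then show "\<phi> {{a}} = Qop J (\<phi> {{}})" "Pop J (\<phi> {{}}) = {}"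
    using is_hom_Qop[OF assms, of "{{}}"] is_hom_Pop[OF assms, of "{{}}"] is_hom_zero[OF assms]
    by simp_all
qed

lemma shifts_length_empty: "shifts_length S J d \<phi> \<Longrightarrow> homog J (card S + d) (\<phi> {{}})"
  unfolding shifts_length_def by (metis Diff_empty empty_subsetI)

lemma M_interval_odd:
  assumes k: "k = 2 * t + 1"
  shows "\<exists>(m::nat) (f::nat \<Rightarrow> vec) (g::nat \<Rightarrow> vec).
    (\<forall>i < 2 ^ t. Pop {1..k} (g i) = vzero \<and> homog {1..k} (t + 1) (g i)) \<and>
    is_basis {1..k}
      (\<lambda>x. case x of Inl (a, n) \<Rightarrow> lam_act {1..k} n (f a)
                    | Inr (i, e) \<Rightarrow> (if e = 0 then g i else Qop {1..k} (g i)))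
      ({Inl (a, n) | a n. a < m \<and> n < 4} \<union> {Inr (i, e) | i (e::nat). i < 2 ^ t \<and> e < 2})"
proof -
  obtain fs ps where dec: "is_decomposition {1..k} {1} fs ps"
    and shift: "\<forall>\<phi>\<in>set ps. shifts_length {1} {1..k} t \<phi>" and len: "length ps = 2 ^ t"
    using decomposition_interval[of "2 * t"] k by auto
  define g where "g i = (ps ! i) {{}}" for i
  have hom: "is_hom {1} {1..k} (ps ! i)" if "i < 2 ^ t" for i
    using is_decomposition_is_hom[OF dec] len that by simp
  have "Pop {1..k} (g i) = vzero \<and> homog {1..k} (t + 1) (g i)" if i: "i < 2 ^ t" for i
  proof
    show "Pop {1..k} (g i) = vzero"
      using is_hom_from_singleton(2)[OF hom[OF i]] by (simp add: g_def vzero_def)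
    have "ps ! i \<in> set ps" using len i by simp
    then have "homog {1..k} (card {1::nat} + t) (g i)"
      unfolding g_def by (rule shifts_length_empty[OF bspec[OF shift]])
    then show "homog {1..k} (t + 1) (g i)" by simp
  qed
  moreover
  define h :: "nat \<times> nat + nat \<times> nat \<Rightarrow> nat \<times> nat + nat \<times> nat set" where
    "h x = (case x of Inl y \<Rightarrow> Inl y | Inr (i, e) \<Rightarrow> Inr (i, if e = 0 then {} else {1}))" for x
  have "bij_betw h ({Inl (a, n) | a n. a < length fs \<and> n < 4} \<union> {Inr (i, e) | i e. i < 2 ^ t \<and> e < 2})
      ({Inl (a, n) | a n. a < length fs \<and> n < 4} \<union> {Inr (i, I) | i I. i < length ps \<and> I \<subseteq> {1}})"
    by (rule bij_betw_byWitness[where f' = "\<lambda>x. case x of Inl y \<Rightarrow> Inl y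
        | Inr (i, I) \<Rightarrow> Inr (i, if I = {} then 0 else 1)"]) (auto simp: h_def len subset_singleton_iff)
  then have "is_basis {1..k}
      (\<lambda>x. case x of Inl (a, n) \<Rightarrow> lam_act {1..k} n (fs ! a)
                    | Inr (i, e) \<Rightarrow> (if e = 0 then g i else Qop {1..k} (g i)))
      ({Inl (a, n) | a n. a < length fs \<and> n < 4} \<union> {Inr (i, e) | i (e::nat). i < 2 ^ t \<and> e < 2})"
  proof (rule is_basis_reindex[OF is_decomposition_basis[OF dec]])
    have "(ps ! i) {{1}} = Qop {1..k} (g i)" if "i < 2 ^ t" for i
      using is_hom_from_singleton(1)[OF hom[OF that]] by (simp add: g_def)
    then show "(case x of Inl (a, n) \<Rightarrow> lam_act {1..k} n (fs ! a)
          | Inr (i, e) \<Rightarrow> if e = 0 then g i else Qop {1..k} (g i))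
        = (case h x of Inl (a, n) \<Rightarrow> lam_act {1..k} n (fs ! a) | Inr (i, I) \<Rightarrow> (ps ! i) {I})"
      if "x \<in> {Inl (a, n) | a n. a < length fs \<and> n < 4} \<union> {Inr (i, e) | i e. i < 2 ^ t \<and> e < 2}"
      for x using that by (auto simp: h_def g_def)
  qed
  ultimately show ?thesis by blast
qed

lemma M_interval_even:
  assumes k: "k = 2 * t" and t: "t \<ge> 1"
  shows "\<exists>(m::nat) (f::nat \<Rightarrow> vec) (\<phi>::nat \<Rightarrow> vec \<Rightarrow> vec).
    (\<forall>i < 2 ^ (t - 1). is_hom {1, 2} {1..k} (\<phi> i) \<and> homog {1..k} (t + 1) (\<phi> i {{}})) \<and>
    is_basis {1..k}
      (\<lambda>x. case x of Inl (a, n) \<Rightarrow> lam_act {1..k} n (f a) | Inr (i, I) \<Rightarrow> \<phi> i {I})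
      ({Inl (a, n) | a n. a < m \<and> n < 4} \<union> {Inr (i, I) | i I. i < 2 ^ (t - 1) \<and> I \<subseteq> {1, 2}})"
proof -
  have n: "odd (2 * t - 1)" "2 * t - 1 + 1 = k" "(2 * t - 1) div 2 = t - 1" using k t by auto
  obtain fs ps where dec: "is_decomposition {1..k} {1, 2} fs ps"
    and shift: "\<forall>\<phi>\<in>set ps. shifts_length {1, 2} {1..k} (t - 1) \<phi>" and len: "length ps = 2 ^ (t - 1)"
    using decomposition_interval[of "2 * t - 1"] n by auto
  have "is_hom {1, 2} {1..k} (ps ! i) \<and> homog {1..k} (t + 1) ((ps ! i) {{}})" if "i < 2 ^ (t - 1)" for i
  proof
    show "is_hom {1, 2} {1..k} (ps ! i)" using is_decomposition_is_hom[OF dec] len that by simp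
    have "ps ! i \<in> set ps" using len that by simp
    then have "homog {1..k} (card {1, 2::nat} + (t - 1)) ((ps ! i) {{}})"
      by (rule shifts_length_empty[OF bspec[OF shift]])
    then show "homog {1..k} (t + 1) ((ps ! i) {{}})" using t by simp
  qed
  then show ?thesis using is_decomposition_basis[OF dec] len
    by (intro exI[of _ "length fs"] exI[of _ "(!) fs"] exI[of _ "(!) ps"]) simp
qed

theorem mainTheorem7:
  fixes k t :: nat
  assumes "k \<ge> 1"
  shows
  "(k = 2 * t + 1 \<longrightarrow>
     (\<exists>(m::nat) (f::nat \<Rightarrow> vec) (g::nat \<Rightarrow> vec).
        (\<forall>i < 2 ^ t. Pop {1..k} (g i) = vzero \<and> homog {1..k} (t + 1) (g i)) \<and>
        is_basis {1..k}
          (\<lambda>x. case x of Inl (a, n) \<Rightarrow> lam_act {1..k} n (f a)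
                        | Inr (i, e) \<Rightarrow> (if e = 0 then g i else Qop {1..k} (g i)))
          ({Inl (a, n) | a n. a < m \<and> n < 4} \<union> {Inr (i, e) | i (e::nat). i < 2 ^ t \<and> e < 2})))
   \<and>
   (k = 2 * t \<and> t \<ge> 1 \<longrightarrow>
     (\<exists>(m::nat) (f::nat \<Rightarrow> vec) (\<phi>::nat \<Rightarrow> vec \<Rightarrow> vec).
        (\<forall>i < 2 ^ (t - 1). is_hom {1, 2} {1..k} (\<phi> i)
             \<and> homog {1..k} (t + 1) (\<phi> i {{}})) \<and>
        is_basis {1..k}
          (\<lambda>x. case x of Inl (a, n) \<Rightarrow> lam_act {1..k} n (f a)
                        | Inr (i, I) \<Rightarrow> \<phi> i {I})
          ({Inl (a, n) | a n. a < m \<and> n < 4} \<union>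
           {Inr (i, I) | i I. i < 2 ^ (t - 1) \<and> I \<subseteq> {1, 2}})))"
  using M_interval_odd[of k t] M_interval_even[of k t] by blast

end
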